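(* Consider the plant $\dot x=f(x,u)$ with $f$ satisfying Assumption 1, a DT control law $U:\mathbb{R}^n\times[0,\infty)\to\mathbb{R}^m$, and the CT control $u_c(x):=U(x,0)$, with $u_c$ satisfying Assumption 2. Suppose that $U$ is StL and that the pair $(U_c,U)$ is StC, where $U_c(x,T):=u_c(x)$ for all $T\ge0$. Let $\bar F^e_U(x,T):=F^e(x,U(x,T),T)$ be the exact closed-loop DT model. Then the CT closed-loop system $\dot x=h(x):=f(x,u_c(x))$ is: (a) LES if and only if $\bar F^e_U$ is LES-VSR; (b) GALES if and only if $\bar F^e_U$ is SLES-VSR; (c) GES if and only if $\bar F^e_U$ is SES-VSR.
   Context: Assumption 1: $f:\mathbb{R}^n\times\mathbb{R}^m\to\mathbb{R}^n$ satisfies $f(0,0)=0$ and for every $M,M_u\ge0$ there is $L>0$ with $|f(x,u)-f(y,v)|\le L(|x-y|+|u-v|)$ for all $|x|,|y|\le M$, $|u|,|v|\le M_u$. Assumption 2: $u_c:\mathbb{R}^n\to\mathbb{R}^m$ satisfies $u_c(0)=0$ and for every $M\ge0$ there is $L>0$ with $|u_c(x)-u_c(y)|\le L|x-y|$ for all $|x|,|y|\le M$. Exact DT model: $F^e(x,u,T)$ is the value at time $T$ of the solution of $\dot z=f(z,u)$ (with $u$ held constant) with $z(0)=x$, i.e. $F^e(x,u,T)=x+\int_0^Tf(F^e(x,u,s),u)\,ds$. Solutions of a closed-loop DT model $\bar F$ under $\{T_i\}$: $x_{k+1}=\bar F(x_k,T_k)$. $\Phi(T)$: set of sequences $\{T_i\}_{i\ge0}$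 with $T_i\in(0,T)$; $\sum_{i=0}^{-1}T_i=0$. $\mathcal{K},\mathcal{K}_\infty,\mathcal{KL}$: standard comparison function classes. CT stability of $\dot x=h(x)$: GAS if there is $\beta\in\mathcal{KL}$ with $|x(t)|\le\beta(|x_0|,t)$ for all $x_0$, $t\ge0$; GES if moreover $\beta(r,t)=Kre^{-\lambda t}$ with $K\ge1,\lambda>0$; LES if there exist $K\ge1$, $R,\lambda>0$ with $|x(t)|\le K|x_0|e^{-\lambda t}$ for all $|x_0|\le R$, $t\ge0$; GALES if GAS and LES. StL: $U$ is StL if for each $M\ge0$ there exist $K(M)>0$, $T^*(M)>0$ ($T^*$ nonincreasing) such that for all $|x|,|y|\le M$, $T\in[0,T^* )$: $U(0,T)=0$ and $|U(x,T)-U(y,T)|\le K|x-y|$. StC: $(U,V)$ is StC if for each $M\ge0$ there exist $\rho\in\mathcal{K}_\infty$, $T^*(M)>0$ with $|U(x,T)-V(x,T)|\le\rho(T)|x|$ for all $|x|\le M$, $T\in[0,T^* )$. DT stability (VSR): SPS-VSR: there is $\beta\in\mathcal{KL}$ such that for all $M\ge0,R>0$ there is $T^\star(M,R)>0$ with $|x_k|\le\beta(|x_0|,\sum_{i=0}^{k-1}T_i)+R$ for all $k$, $\{T_i\}\in\Phi(T^\star)$, $|x_0|\le M$. LES-VSR: there exist $K\ge1$, $R,T^\star,\lambda>0$ with $|x_k|\le K|x_0|e^{-\lambda\sum_{i=0}^{k-1}T_i}$ for all $k$, $\{T_i\}\in\Phi(T^\star)$, $|x_0|\le R$. SLES-VSR: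 SPS-VSR and LES-VSR. SES-VSR: there exist $K\ge1,\lambda>0$ such that for each $M\ge0$ there is $T^\star(M)>0$ with $|x_k|\le K|x_0|e^{-\lambda\sum_{i=0}^{k-1}T_i}$ for all $k$, $\{T_i\}\in\Phi(T^\star)$, $|x_0|\le M$. *)

theory Defs
  imports "HOL-Analysis.Analysis"
begin

definition class_K :: "(real \<Rightarrow> real) \<Rightarrow> bool" where
  "class_K \<alpha> \<longleftrightarrow> continuous_on {0..} \<alpha> \<and> \<alpha> 0 = 0 \<and> strict_mono_on {0..} \<alpha>"

definition class_Kinf :: "(real \<Rightarrow> real) \<Rightarrow> bool" where
  "class_Kinf \<alpha> \<longleftrightarrow> class_K \<alpha> \<and> filterlim \<alpha> at_top at_top"

definition class_KL :: "(real \<Rightarrow> real \<Rightarrow> real) \<Rightarrow> bool" where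
  "class_KL \<beta> \<longleftrightarrow>
     (\<forall>t\<ge>0. class_K (\<lambda>r. \<beta> r t)) \<and>
     (\<forall>r\<ge>0. antimono_on {0..} (\<lambda>t. \<beta> r t) \<and> ((\<lambda>t. \<beta> r t) \<longlongrightarrow> 0) at_top)"

definition assumption1 :: "(real^'n \<Rightarrow> real^'m \<Rightarrow> real^'n) \<Rightarrow> bool" where
  "assumption1 f \<longleftrightarrow> f 0 0 = 0 \<and>
     (\<forall>M\<ge>0. \<forall>Mu\<ge>0. \<exists>L>0. \<forall>x y u v. norm x \<le> M \<and> norm y \<le> M \<and> norm u \<le> Mu \<and> norm v \<le> Mu
        \<longrightarrow> norm (f x u - f y v) \<le> L * (norm (x - y) + norm (u - v)))"

definition assumption2 :: "(real^'n \<Rightarrow> real^'m) \<Rightarrow> bool" where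
  "assumption2 uc \<longleftrightarrow> uc 0 = 0 \<and>
     (\<forall>M\<ge>0. \<exists>L>0. \<forall>x y. norm x \<le> M \<and> norm y \<le> M \<longrightarrow> norm (uc x - uc y) \<le> L * norm (x - y))"

definition ode_sol :: "(real^'n \<Rightarrow> real^'m \<Rightarrow> real^'n) \<Rightarrow> real^'m \<Rightarrow> real^'n \<Rightarrow> real \<Rightarrow> (real \<Rightarrow> real^'n) \<Rightarrow> bool" where
  "ode_sol f u x T z \<longleftrightarrow> continuous_on {0..T} z \<and>
     (\<forall>t\<in>{0..T}. z t = x + integral {0..t} (\<lambda>s. f (z s) u))"

text \<open>Value at time T of the (unique, by local Lipschitzness) solution.\<close>
definition Fe :: "(real^'n \<Rightarrow> real^'m \<Rightarrow> real^'n) \<Rightarrow> real^'n \<Rightarrow> real^'m \<Rightarrow> real \<Rightarrow> real^'n" where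
  "Fe f x u T = (THE y. \<exists>z. ode_sol f u x T z \<and> z T = y)"

definition ct_sol :: "(real^'n \<Rightarrow> real^'n) \<Rightarrow> real^'n \<Rightarrow> (real \<Rightarrow> real^'n) \<Rightarrow> bool" where
  "ct_sol h x0 z \<longleftrightarrow> continuous_on {0..} z \<and>
     (\<forall>t\<ge>0. z t = x0 + integral {0..t} (\<lambda>s. h (z s)))"

definition GAS :: "(real^'n \<Rightarrow> real^'n) \<Rightarrow> bool" where
  "GAS h \<longleftrightarrow> (\<exists>\<beta>. class_KL \<beta> \<and>
     (\<forall>x0. \<exists>z. ct_sol h x0 z \<and> (\<forall>t\<ge>0. norm (z t) \<le> \<beta> (norm x0) t)))"

definition GES :: "(real^'n \<Rightarrow> real^'n) \<Rightarrow> bool" where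
  "GES h \<longleftrightarrow> (\<exists>K\<ge>1. \<exists>lam>0.
     (\<forall>x0. \<exists>z. ct_sol h x0 z \<and> (\<forall>t\<ge>0. norm (z t) \<le> K * norm x0 * exp (- lam * t))))"

definition LES :: "(real^'n \<Rightarrow> real^'n) \<Rightarrow> bool" where
  "LES h \<longleftrightarrow> (\<exists>K\<ge>1. \<exists>R>0. \<exists>lam>0.
     (\<forall>x0. norm x0 \<le> R \<longrightarrow>
        (\<exists>z. ct_sol h x0 z \<and> (\<forall>t\<ge>0. norm (z t) \<le> K * norm x0 * exp (- lam * t)))))"

definition GALES :: "(real^'n \<Rightarrow> real^'n) \<Rightarrow> bool" where
  "GALES h \<longleftrightarrow> GAS h \<and> LES h"

definition Phi :: "real \<Rightarrow> (nat \<Rightarrow> real) set" where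
  "Phi T = {Ts. \<forall>i. 0 < Ts i \<and> Ts i < T}"

primrec dt_traj :: "('a \<Rightarrow> real \<Rightarrow> 'a) \<Rightarrow> 'a \<Rightarrow> (nat \<Rightarrow> real) \<Rightarrow> nat \<Rightarrow> 'a" where
  "dt_traj Fb x0 Ts 0 = x0"
| "dt_traj Fb x0 Ts (Suc k) = Fb (dt_traj Fb x0 Ts k) (Ts k)"

definition SPS_VSR :: "(real^'n \<Rightarrow> real \<Rightarrow> real^'n) \<Rightarrow> bool" where
  "SPS_VSR Fb \<longleftrightarrow> (\<exists>\<beta>. class_KL \<beta> \<and>
     (\<forall>M\<ge>0. \<forall>R>0. \<exists>Tst>0. \<forall>Ts\<in>Phi Tst. \<forall>x0. norm x0 \<le> M \<longrightarrow>
        (\<forall>k. norm (dt_traj Fb x0 Ts k) \<le> \<beta> (norm x0) (\<Sum>i<k. Ts i) + R)))"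

definition LES_VSR :: "(real^'n \<Rightarrow> real \<Rightarrow> real^'n) \<Rightarrow> bool" where
  "LES_VSR Fb \<longleftrightarrow> (\<exists>K\<ge>1. \<exists>R>0. \<exists>Tst>0. \<exists>lam>0.
     \<forall>Ts\<in>Phi Tst. \<forall>x0. norm x0 \<le> R \<longrightarrow>
        (\<forall>k. norm (dt_traj Fb x0 Ts k) \<le> K * norm x0 * exp (- lam * (\<Sum>i<k. Ts i))))"

definition SLES_VSR :: "(real^'n \<Rightarrow> real \<Rightarrow> real^'n) \<Rightarrow> bool" where
  "SLES_VSR Fb \<longleftrightarrow> SPS_VSR Fb \<and> LES_VSR Fb"

definition SES_VSR :: "(real^'n \<Rightarrow> real \<Rightarrow> real^'n) \<Rightarrow> bool" where
  "SES_VSR Fb \<longleftrightarrow> (\<exists>K\<ge>1. \<exists>lam>0. \<forall>M\<ge>0. \<exists>Tst>0.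
     \<forall>Ts\<in>Phi Tst. \<forall>x0. norm x0 \<le> M \<longrightarrow>
        (\<forall>k. norm (dt_traj Fb x0 Ts k) \<le> K * norm x0 * exp (- lam * (\<Sum>i<k. Ts i))))"

definition StL :: "(real^'n \<Rightarrow> real \<Rightarrow> real^'m) \<Rightarrow> bool" where
  "StL U \<longleftrightarrow> (\<exists>K Tst :: real \<Rightarrow> real.
     antimono_on {0..} Tst \<and>
     (\<forall>M\<ge>0. K M > 0 \<and> Tst M > 0 \<and>
        (\<forall>x y T. norm x \<le> M \<and> norm y \<le> M \<and> 0 \<le> T \<and> T < Tst M \<longrightarrow>
           U 0 T = 0 \<and> norm (U x T - U y T) \<le> K M * norm (x - y))))"

definition StC :: "(real^'n \<Rightarrow> real \<Rightarrow> real^'m) \<Rightarrow> (real^'n \<Rightarrow> real \<Rightarrow> real^'m) \<Rightarrow> bool" where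
  "StC U V \<longleftrightarrow> (\<forall>M\<ge>0. \<exists>\<rho> Tst. class_Kinf \<rho> \<and> Tst > 0 \<and>
     (\<forall>x T. norm x \<le> M \<and> 0 \<le> T \<and> T < Tst \<longrightarrow> norm (U x T - V x T) \<le> \<rho> T * norm x))"

end

theory Submission
  imports Defs
begin

text \<open>One sampling step of length \<open>T\<close> of the exact model differs from the continuous-time flow
  by a factor \<open>1 + K T\<close> on the error plus a term \<open>T \<delta>(T) |x|\<close> with \<open>\<delta>(T) \<rightarrow> 0\<close>: StC makes the
  input mismatch \<open>U(x, T) - u\<^sub>c(x)\<close> small relative to \<open>|x|\<close> and StL keeps the input bounded.
  Summing these errors, the sampled trajectory stays \<open>\<epsilon> |x|\<close>-close to the solution up to any
  fixed time \<open>\<tau>\<close> once the sampling periods are small.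

  From continuous to discrete time, the KL or exponential bound therefore holds for the sampled
  trajectory on a window of length \<open>\<tau>\<close>, up to \<open>\<epsilon> |x|\<close>, and restarting at the first sampling
  instant after \<open>\<tau>\<close> propagates it; in the exponential case the norm halves over every window.
  Conversely, uniform sampling of any time \<open>s\<close> shows that a discrete-time bound valid for all small
  sampling periods is inherited by the solution up to any \<open>\<epsilon>\<close>. This a priori bound keeps local
  solutions in a fixed ball, so they continue to all of \<open>[0, \<infinity>)\<close>.\<close>

section \<open>Autonomous ODEs in integral form\<close>

definition ode_solution :: "('a::euclidean_space \<Rightarrow> 'a) \<Rightarrow> 'a \<Rightarrow> real \<Rightarrow> (real \<Rightarrow> 'a) \<Rightarrow> bool" where
  "ode_solution g x T z \<longleftrightarrow>
     continuous_on {0..T} z \<and> (\<forall>t\<in>{0..T}. z t = x + integral {0..t} (\<lambda>s. g (z s)))"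

definition lipschitz_on_bounded :: "('a::real_normed_vector \<Rightarrow> 'b::real_normed_vector) \<Rightarrow> bool" where
  "lipschitz_on_bounded g \<longleftrightarrow>
     (\<forall>M\<ge>0. \<exists>L>0. \<forall>x y. norm x \<le> M \<and> norm y \<le> M \<longrightarrow> norm (g x - g y) \<le> L * norm (x - y))"

lemma lipschitz_on_boundedE:
  assumes "lipschitz_on_bounded g" "0 \<le> M"
  obtains L where "L > 0" "\<And>x y. norm x \<le> M \<Longrightarrow> norm y \<le> M \<Longrightarrow> norm (g x - g y) \<le> L * norm (x - y)"
  using assms unfolding lipschitz_on_bounded_def by blast

lemma lipschitz_on_bounded_continuous_on:
  assumes "lipschitz_on_bounded g"
  shows "continuous_on S g"
proof -
  have "continuous (at x) g" for x
  proof -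
    obtain L where L: "L > 0"
      "\<And>y z. norm y \<le> norm x + 1 \<Longrightarrow> norm z \<le> norm x + 1 \<Longrightarrow> norm (g y - g z) \<le> L * norm (y - z)"
      using lipschitz_on_boundedE[OF assms, of "norm x + 1"] by auto
    show ?thesis unfolding continuous_at_eps_delta
    proof (intro allI impI)
      fix e :: real assume e: "e > 0"
      show "\<exists>d>0. \<forall>y. dist y x < d \<longrightarrow> dist (g y) (g x) < e"
      proof (intro exI[of _ "min 1 (e / L)"] conjI allI impI)
        show "0 < min 1 (e / L)" using e L by auto
        fix y assume y: "dist y x < min 1 (e / L)"
        have "norm y \<le> norm x + 1" using y norm_triangle_sub[of y x] by (auto simp: dist_norm)
        then have "norm (g y - g x) \<le> L * norm (y - x)" using L(2) by auto
        also have "\<dots> < L * (e / L)" using y L by (intro mult_strict_left_mono) (auto simp: dist_norm)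
        finally show "dist (g y) (g x) < e" using L by (simp add: dist_norm)
      qed
    qed
  qed
  then show ?thesis by (simp add: continuous_at_imp_continuous_on)
qed

lemma lipschitz_on_bounded_linear_growth:
  assumes "lipschitz_on_bounded g" "g 0 = 0" "0 \<le> M"
  obtains L where "L > 0" "\<And>x. norm x \<le> M \<Longrightarrow> norm (g x) \<le> L * norm x"
proof -
  obtain L where "L > 0" "\<And>x y. norm x \<le> M \<Longrightarrow> norm y \<le> M \<Longrightarrow> norm (g x - g y) \<le> L * norm (x - y)"
    using lipschitz_on_boundedE[OF assms(1,3)] by blast
  then show ?thesis using that[of L] assms(2,3) by (metis diff_zero norm_zero)
qed

text \<open>Maximise \<open>w(r) exp(-2 L r)\<close>: with the doubled rate the integral term contributes at most half
  of that maximum, whence the two factors 2.\<close>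
lemma gronwall_doubling:
  fixes w :: "real \<Rightarrow> real"
  assumes cont: "continuous_on {0..t} w" and a: "0 \<le> a" and L: "0 < L"
    and nonneg: "\<And>s. s \<in> {0..t} \<Longrightarrow> 0 \<le> w s"
    and ineq: "\<And>s. s \<in> {0..t} \<Longrightarrow> w s \<le> a + L * integral {0..s} w"
    and s: "s \<in> {0..t}"
  shows "w s \<le> 2 * a * exp (2 * L * s)"
proof -
  define \<phi> where "\<phi> r = w r * exp (- (2 * L * r))" for r
  have "continuous_on {0..t} \<phi>" unfolding \<phi>_def by (intro continuous_intros cont)
  then obtain r0 where r0: "r0 \<in> {0..t}" and mx: "\<And>r. r \<in> {0..t} \<Longrightarrow> \<phi> r \<le> \<phi> r0"
    using continuous_attains_sup[of "{0..t}" \<phi>] s by auto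
  define m where "m = \<phi> r0"
  have m0: "0 \<le> m" unfolding m_def \<phi>_def using nonneg[OF r0] by simp
  have wle: "w r \<le> m * exp (2 * L * r)" if "r \<in> {0..t}" for r
  proof -
    have "w r = \<phi> r * exp (2 * L * r)" unfolding \<phi>_def by (simp add: exp_minus field_simps)
    also have "\<dots> \<le> m * exp (2 * L * r)" using mx[OF that] unfolding m_def by simp
    finally show ?thesis .
  qed
  have key: "w r \<le> a + m * (exp (2 * L * r) - 1) / 2" if r: "r \<in> {0..t}" for r
  proof -
    have der: "\<And>x. x \<in> {0..r} \<Longrightarrow> ((\<lambda>x. m * exp (2 * L * x) / (2 * L)) has_vector_derivative
        m * exp (2 * L * x)) (at x within {0..r})"
      using L by (auto intro!: derivative_eq_intros simp: has_real_derivative_iff_has_vector_derivative[symmetric])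
    have hi: "((\<lambda>x. m * exp (2 * L * x)) has_integral
        (m * exp (2 * L * r) / (2 * L) - m * exp (2 * L * 0) / (2 * L))) {0..r}"
      using fundamental_theorem_of_calculus[OF _ der] r by auto
    have "integral {0..r} w \<le> integral {0..r} (\<lambda>x. m * exp (2 * L * x))"
    proof (rule integral_le)
      show "w integrable_on {0..r}"
        using r by (intro integrable_continuous_real continuous_on_subset[OF cont]) auto
      show "(\<lambda>x. m * exp (2 * L * x)) integrable_on {0..r}" using hi by blast
      show "\<And>x. x \<in> {0..r} \<Longrightarrow> w x \<le> m * exp (2 * L * x)" using wle r by auto
    qed
    also have "\<dots> = m * exp (2 * L * r) / (2 * L) - m / (2 * L)" using integral_unique[OF hi] by simp
    finally have "L * integral {0..r} w \<le> L * (m * exp (2 * L * r) / (2 * L) - m / (2 * L))"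
      using L by (simp add: mult_left_mono)
    also have "\<dots> = m * (exp (2 * L * r) - 1) / 2" using L by (simp add: field_simps)
    finally show ?thesis using ineq[OF r] by linarith
  qed
  have "m \<le> a + m / 2"
  proof -
    have "m = w r0 * exp (- (2 * L * r0))" unfolding m_def \<phi>_def ..
    also have "\<dots> \<le> (a + m * (exp (2 * L * r0) - 1) / 2) * exp (- (2 * L * r0))"
      using key[OF r0] by (simp add: mult_right_mono)
    also have "\<dots> = a * exp (- (2 * L * r0)) + m / 2 - m / 2 * exp (- (2 * L * r0))"
      by (simp add: field_simps exp_minus)
    also have "\<dots> \<le> a + m / 2"
    proof -
      have "exp (- (2 * L * r0)) \<le> 1" using L r0 by simp
      then have "a * exp (- (2 * L * r0)) \<le> a" using a by (simp add: mult_left_le)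
      moreover have "0 \<le> m / 2 * exp (- (2 * L * r0))" using m0 by simp
      ultimately show ?thesis by linarith
    qed
    finally show ?thesis .
  qed
  then have "m \<le> 2 * a" by linarith
  then show ?thesis using wle[OF s] by (smt (verit) exp_gt_zero mult_right_mono)
qed

lemma gronwall_short_interval:
  fixes D :: "real \<Rightarrow> real"
  assumes cont: "continuous_on {0..T} D" and T: "0 \<le> T" and L: "0 \<le> L" "L * T \<le> 1/2"
    and nonneg: "\<And>t. t \<in> {0..T} \<Longrightarrow> 0 \<le> D t"
    and ineq: "\<And>t. t \<in> {0..T} \<Longrightarrow> D t \<le> c + L * integral {0..t} D"
  shows "D T \<le> c * (1 + 2 * L * T)"
proof -
  obtain r0 where r0: "r0 \<in> {0..T}" and max: "\<And>r. r \<in> {0..T} \<Longrightarrow> D r \<le> D r0"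
    using continuous_attains_sup[of "{0..T}" D] cont T by auto
  define m where "m = D r0"
  have m0: "0 \<le> m" unfolding m_def using nonneg[OF r0] .
  have bound: "D t \<le> c + L * T * m" if t: "t \<in> {0..T}" for t
  proof -
    have "integral {0..t} D \<le> norm (integral {0..t} D)" by simp
    also have "\<dots> \<le> m * (t - 0)"
      using t nonneg max unfolding m_def
      by (intro integral_bound continuous_on_subset[OF cont]) auto
    also have "\<dots> \<le> m * T" using t m0 by (intro mult_left_mono) auto
    finally have "L * integral {0..t} D \<le> L * (m * T)" using L(1) by (rule mult_left_mono)
    then show ?thesis using ineq[OF t] by (simp add: algebra_simps)
  qed
  have "L * T * m \<le> m / 2" using mult_right_mono[OF L(2) m0] by simp
  then have "m \<le> 2 * c" using bound[OF r0] unfolding m_def by linarith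
  then have "L * T * m \<le> L * T * (2 * c)" using L T by (intro mult_left_mono) auto
  then show ?thesis using bound[of T] T by (simp add: algebra_simps)
qed

text \<open>Picard iteration on the bounded continuous functions, for the field retracted onto
  the ball around the initial value, which makes it globally Lipschitz and bounded.\<close>
lemma ode_solution_local_existence:
  fixes g :: "'a::euclidean_space \<Rightarrow> 'a"
  assumes L: "0 < L" and G: "0 < G"
    and lip: "\<And>x y. x \<in> cball x0 1 \<Longrightarrow> y \<in> cball x0 1 \<Longrightarrow> norm (g x - g y) \<le> L * norm (x - y)"
    and bnd: "\<And>x. x \<in> cball x0 1 \<Longrightarrow> norm (g x) \<le> G"
    and T: "0 \<le> T" "T * G \<le> 1" "T * L \<le> 1/2"
  obtains z where "ode_solution g x0 T z" "\<And>t. t \<in> {0..T} \<Longrightarrow> norm (z t - x0) \<le> G * t"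
proof -
  define p where "p = closest_point (cball x0 (1::real))"
  have pin: "p y \<in> cball x0 1" for y
    unfolding p_def by (rule closest_point_in_set) auto
  have pid: "y \<in> cball x0 1 \<Longrightarrow> p y = y" for y
    unfolding p_def by (rule closest_point_self)
  have plip: "dist (p y) (p y') \<le> dist y y'" for y y'
    unfolding p_def by (rule closest_point_lipschitz) auto
  define gt where "gt y = g (p y)" for y
  have gtlip: "norm (gt y - gt y') \<le> L * norm (y - y')" for y y'
  proof -
    have "norm (gt y - gt y') \<le> L * norm (p y - p y')" unfolding gt_def using lip[OF pin pin] .
    also have "\<dots> \<le> L * norm (y - y')" using plip[of y y'] L by (simp add: dist_norm)
    finally show ?thesis .
  qed
  have gtb: "norm (gt y) \<le> G" for y unfolding gt_def using bnd[OF pin] .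
  have gtc: "continuous_on S gt" for S
    by (rule lipschitz_on_bounded_continuous_on) (use L gtlip in \<open>auto simp: lipschitz_on_bounded_def\<close>)
  define cl where "cl t = max 0 (min T t)" for t :: real
  have clin: "cl t \<in> {0..T}" for t unfolding cl_def using T by auto
  have clid: "t \<in> {0..T} \<Longrightarrow> cl t = t" for t unfolding cl_def by auto
  have clc: "continuous_on UNIV cl" unfolding cl_def by (intro continuous_intros)
  define F where "F z t = x0 + integral {0..cl t} (\<lambda>s. gt (apply_bcontfun z s))"
    for z :: "(real, 'a) bcontfun" and t
  have gtz: "continuous_on S (\<lambda>s. gt (apply_bcontfun z s))" for z :: "(real, 'a) bcontfun" and S
    using continuous_on_compose[OF continuous_on_apply_bcontfun gtc] by (simp add: o_def)
  have Fb: "F z \<in> bcontfun" for z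
  proof (rule bcontfun_normI)
    have "continuous_on {0..T} (\<lambda>t. integral {0..t} (\<lambda>s. gt (apply_bcontfun z s)))"
      by (rule indefinite_integral_continuous_1[OF integrable_continuous_real[OF gtz]])
    then have "continuous_on UNIV (\<lambda>t. integral {0..cl t} (\<lambda>s. gt (apply_bcontfun z s)))"
      by (rule continuous_on_compose2[OF _ clc, of "{0..T}"]) (use clin in auto)
    then show "continuous_on UNIV (F z)" unfolding F_def by (intro continuous_intros)
    fix t
    have "norm (integral {0..cl t} (\<lambda>s. gt (apply_bcontfun z s))) \<le> G * (cl t - 0)"
      by (rule integral_bound[OF _ gtz]) (use clin gtb in auto)
    also have "\<dots> \<le> G * T" using clin[of t] G by (auto intro: mult_left_mono)
    finally show "norm (F z t) \<le> norm x0 + G * T" unfolding F_def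
      by (meson add_left_mono norm_triangle_ineq order_trans)
  qed
  define \<Phi> where "\<Phi> z = Bcontfun (F z)" for z
  have Phi_app: "apply_bcontfun (\<Phi> z) = F z" for z
    unfolding \<Phi>_def using Fb by (simp add: Bcontfun_inverse)
  have contr: "dist (\<Phi> z) (\<Phi> z') \<le> (1/2) * dist z z'" for z z'
  proof (rule dist_bound)
    fix t
    have "F z t - F z' t = integral {0..cl t} (\<lambda>s. gt (apply_bcontfun z s) - gt (apply_bcontfun z' s))"
      unfolding F_def by (simp add: integral_diff integrable_continuous_real[OF gtz])
    also have "norm \<dots> \<le> (L * dist z z') * (cl t - 0)"
    proof (rule integral_bound)
      show "continuous_on {0..cl t} (\<lambda>s. gt (apply_bcontfun z s) - gt (apply_bcontfun z' s))"
        by (intro continuous_intros gtz)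
      show "0 \<le> cl t" using clin by auto
      fix s
      have "norm (gt (apply_bcontfun z s) - gt (apply_bcontfun z' s))
          \<le> L * norm (apply_bcontfun z s - apply_bcontfun z' s)"
        by (rule gtlip)
      also have "\<dots> \<le> L * dist z z'" using dist_bounded[of z s z'] L by (simp add: dist_norm)
      finally show "norm (gt (apply_bcontfun z s) - gt (apply_bcontfun z' s)) \<le> L * dist z z'" .
    qed
    also have "\<dots> \<le> (1/2) * dist z z'"
    proof -
      have "L * (cl t - 0) \<le> L * T" using clin[of t] L by auto
      then have "L * (cl t - 0) \<le> 1/2" using T by (simp add: mult.commute)
      from mult_right_mono[OF this zero_le_dist[of z z']] show ?thesis by (simp add: algebra_simps)
    qed
    finally show "dist (apply_bcontfun (\<Phi> z) t) (apply_bcontfun (\<Phi> z') t) \<le> 1 / 2 * dist z z'"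
      by (simp add: Phi_app dist_norm)
  qed
  obtain zf where zf: "\<Phi> zf = zf" using banach_fix_type[of "1/2" \<Phi>] contr by auto
  define z where "z = apply_bcontfun zf"
  have eq: "z t = x0 + integral {0..t} (\<lambda>s. gt (z s))" if "t \<in> {0..T}" for t
    using fun_cong[OF Phi_app[of zf], of t] clid[OF that] unfolding zf F_def z_def by simp
  have drift: "norm (z t - x0) \<le> G * t" if t: "t \<in> {0..T}" for t
  proof -
    have "norm (z t - x0) = norm (integral {0..t} (\<lambda>s. gt (z s)))" using eq[OF t] by simp
    also have "\<dots> \<le> G * (t - 0)" unfolding z_def by (rule integral_bound[OF _ gtz]) (use t gtb in auto)
    finally show ?thesis by simp
  qed
  have inball: "z t \<in> cball x0 1" if "t \<in> {0..T}" for t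
  proof -
    have "G * t \<le> G * T" using that G by (auto intro: mult_left_mono)
    then show ?thesis using drift[OF that] T by (simp add: dist_norm norm_minus_commute mult.commute)
  qed
  have "ode_solution g x0 T z"
    unfolding ode_solution_def
  proof (intro conjI ballI)
    show "continuous_on {0..T} z" unfolding z_def by simp
    fix t assume t: "t \<in> {0..T}"
    have "integral {0..t} (\<lambda>s. gt (z s)) = integral {0..t} (\<lambda>s. g (z s))"
      by (rule integral_cong) (use t inball pid in \<open>auto simp: gt_def\<close>)
    then show "z t = x0 + integral {0..t} (\<lambda>s. g (z s))" using eq[OF t] by simp
  qed
  then show ?thesis using that drift by blast
qed

lemma ode_solution_initial: "ode_solution g x T z \<Longrightarrow> 0 \<le> T \<Longrightarrow> z 0 = x"
  unfolding ode_solution_def by auto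

lemma ode_solution_restrict: "ode_solution g x T z \<Longrightarrow> T' \<le> T \<Longrightarrow> ode_solution g x T' z"
  unfolding ode_solution_def by (auto intro: continuous_on_subset)

lemma ode_solution_continuous_field:
  assumes "lipschitz_on_bounded g" "ode_solution g x T z"
  shows "continuous_on {0..T} (\<lambda>s. g (z s))"
  using assms unfolding ode_solution_def
  by (auto intro: continuous_on_compose2[OF lipschitz_on_bounded_continuous_on[OF assms(1)]])

lemma ode_solution_integrable:
  assumes "lipschitz_on_bounded g" "ode_solution g x T z" "t \<le> T"
  shows "(\<lambda>s. g (z s)) integrable_on {0..t}"
  using assms
  by (intro integrable_continuous_real continuous_on_subset[OF ode_solution_continuous_field]) auto

lemma ode_solution_bounded:
  assumes "ode_solution g x T z"
  obtains B where "B \<ge> 0" "\<And>t. t \<in> {0..T} \<Longrightarrow> norm (z t) \<le> B"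
proof -
  have "compact (z ` {0..T})"
    using assms unfolding ode_solution_def by (intro compact_continuous_image) auto
  then obtain B where B: "\<forall>y\<in>z ` {0..T}. norm y \<le> B" using compact_imp_bounded bounded_iff by metis
  show ?thesis
  proof (rule that[of "max B 0"])
    fix t assume "t \<in> {0..T}"
    then show "norm (z t) \<le> max B 0" using B by (metis imageI max.coboundedI1)
  qed simp
qed

lemma ode_solution_unique:
  assumes lip: "lipschitz_on_bounded g" and z1: "ode_solution g x T z1" and z2: "ode_solution g x T z2"
    and t: "t \<in> {0..T}"
  shows "z1 t = z2 t"
proof -
  obtain B1 where B1: "B1 \<ge> 0" "\<And>t. t \<in> {0..T} \<Longrightarrow> norm (z1 t) \<le> B1"
    using ode_solution_bounded[OF z1] by metis
  obtain B2 where B2: "\<And>t. t \<in> {0..T} \<Longrightarrow> norm (z2 t) \<le> B2"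
    using ode_solution_bounded[OF z2] by metis
  have "0 \<le> max B1 B2" using B1(1) by simp
  then obtain L where L: "L > 0"
    "\<And>x y. norm x \<le> max B1 B2 \<Longrightarrow> norm y \<le> max B1 B2 \<Longrightarrow> norm (g x - g y) \<le> L * norm (x - y)"
    using lipschitz_on_boundedE[OF lip] by blast
  define w where "w s = norm (z1 s - z2 s)" for s
  have wc: "continuous_on {0..T} w"
    unfolding w_def using z1 z2 unfolding ode_solution_def by (auto intro!: continuous_intros)
  have "w s \<le> 0 + L * integral {0..s} w" if s: "s \<in> {0..T}" for s
  proof -
    have int1: "(\<lambda>r. g (z1 r)) integrable_on {0..s}" and int2: "(\<lambda>r. g (z2 r)) integrable_on {0..s}"
      using s by (auto intro: ode_solution_integrable[OF lip z1] ode_solution_integrable[OF lip z2])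
    have "z1 s - z2 s = integral {0..s} (\<lambda>r. g (z1 r) - g (z2 r))"
      using z1 z2 s unfolding ode_solution_def by (simp add: integral_diff[OF int1 int2])
    then have "w s = norm (integral {0..s} (\<lambda>r. g (z1 r) - g (z2 r)))" unfolding w_def by simp
    also have "\<dots> \<le> integral {0..s} (\<lambda>r. L * w r)"
    proof (rule integral_norm_bound_integral)
      show "(\<lambda>r. g (z1 r) - g (z2 r)) integrable_on {0..s}" using int1 int2 by (rule integrable_diff)
      show "(\<lambda>r. L * w r) integrable_on {0..s}"
        using s by (intro integrable_continuous_real continuous_intros continuous_on_subset[OF wc]) auto
      fix r assume "r \<in> {0..s}"
      then have r: "r \<in> {0..T}" using s by auto
      show "norm (g (z1 r) - g (z2 r)) \<le> L * w r"
        unfolding w_def using L(2) B1(2)[OF r] B2[OF r] by auto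
    qed
    finally show ?thesis by simp
  qed
  then have "w t \<le> 2 * 0 * exp (2 * L * t)"
    by (intro gronwall_doubling[OF wc _ L(1) _ _ t]) (auto simp: w_def)
  then show ?thesis unfolding w_def by simp
qed

lemma ode_solution_shift:
  assumes lip: "lipschitz_on_bounded g" and z: "ode_solution g x \<tau> z" and a: "0 \<le> a" "a + T \<le> \<tau>"
  shows "ode_solution g (z a) T (\<lambda>r. z (a + r))"
  unfolding ode_solution_def
proof (intro conjI ballI)
  show "continuous_on {0..T} (\<lambda>r. z (a + r))"
  proof (rule continuous_on_compose2[of "{0..\<tau>}" z])
    show "continuous_on {0..\<tau>} z" using z unfolding ode_solution_def by blast
  qed (use a in \<open>auto intro!: continuous_intros\<close>)
  fix s assume s: "s \<in> {0..T}"
  have "integral {0..a} (\<lambda>r. g (z r)) + integral {a..a+s} (\<lambda>r. g (z r)) = integral {0..a+s} (\<lambda>r. g (z r))"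
    using s a by (intro Henstock_Kurzweil_Integration.integral_combine ode_solution_integrable[OF lip z]) auto
  moreover have "integral {0..s} (\<lambda>r. g (z (a + r))) = integral {a..a+s} (\<lambda>r. g (z r))"
    using integral_shift_Icc_real[of 0 s "\<lambda>r. g (z r)" a] by (simp add: o_def add.commute)
  moreover have "z (a+s) = x + integral {0..a+s} (\<lambda>r. g (z r))" "z a = x + integral {0..a} (\<lambda>r. g (z r))"
    using z a s unfolding ode_solution_def by auto
  ultimately show "z (a + s) = z a + integral {0..s} (\<lambda>r. g (z (a + r)))" by (simp add: algebra_simps)
qed

lemma ode_solution_drift:
  assumes lip: "lipschitz_on_bounded g" and z: "ode_solution g x T z"
    and C: "\<And>s. s \<in> {0..T} \<Longrightarrow> norm (g (z s)) \<le> C" and t: "t \<in> {0..T}"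
  shows "norm (z t - x) \<le> C * t"
proof -
  have "norm (z t - x) = norm (integral {0..t} (\<lambda>s. g (z s)))"
    using z t unfolding ode_solution_def by auto
  also have "\<dots> \<le> C * (t - 0)"
    using t C by (intro integral_bound continuous_on_subset[OF ode_solution_continuous_field[OF lip z]]) auto
  finally show ?thesis by simp
qed

lemma ode_solution_linear_growth:
  assumes lip: "lipschitz_on_bounded g" and z: "ode_solution g x T z"
    and zB: "\<And>s. s \<in> {0..T} \<Longrightarrow> norm (z s) \<le> B" and L: "L > 0"
    and lin: "\<And>y. norm y \<le> B \<Longrightarrow> norm (g y) \<le> L * norm y" and t: "t \<in> {0..T}"
  shows "norm (z t) \<le> 2 * norm x * exp (2 * L * t)"
proof (rule gronwall_doubling[OF _ _ L _ _ t])
  have zc: "continuous_on {0..T} z" using z unfolding ode_solution_def by blast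
  then show "continuous_on {0..T} (\<lambda>s. norm (z s))" by (intro continuous_intros)
  fix s assume s: "s \<in> {0..T}"
  have "norm (z s) \<le> norm x + norm (integral {0..s} (\<lambda>r. g (z r)))"
    using z s unfolding ode_solution_def by (auto intro: norm_triangle_ineq)
  also have "norm (integral {0..s} (\<lambda>r. g (z r))) \<le> integral {0..s} (\<lambda>r. L * norm (z r))"
  proof (rule integral_norm_bound_integral)
    show "(\<lambda>r. g (z r)) integrable_on {0..s}" using s by (intro ode_solution_integrable[OF lip z]) auto
    show "(\<lambda>r. L * norm (z r)) integrable_on {0..s}"
      using s by (intro integrable_continuous_real continuous_intros continuous_on_subset[OF zc]) auto
    show "norm (g (z r)) \<le> L * norm (z r)" if "r \<in> {0..s}" for r
      using that s by (intro lin zB) auto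
  qed
  finally show "norm (z s) \<le> norm x + L * integral {0..s} (\<lambda>r. norm (z r))" by simp
qed auto

lemma ode_solution_deviation:
  assumes lip1: "lipschitz_on_bounded g1" and w: "ode_solution g1 y T w"
    and lip2: "lipschitz_on_bounded g2" and v: "ode_solution g2 x T v"
    and T: "0 \<le> T" and L: "0 \<le> L" "L * T \<le> 1/2" and Q: "0 \<le> Q"
    and dev: "\<And>r. r \<in> {0..T} \<Longrightarrow> norm (g1 (w r) - g2 (v r)) \<le> L * norm (w r - v r) + Q"
  shows "norm (w T - v T) \<le> (norm (y - x) + Q * T) * (1 + 2 * L * T)"
proof -
  define D where "D t = norm (w t - v t)" for t
  define k where "k r = g1 (w r) - g2 (v r)" for r
  have Dc: "continuous_on {0..T} D"
    unfolding D_def using w v unfolding ode_solution_def by (auto intro!: continuous_intros)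
  have kc: "continuous_on {0..T} k"
    unfolding k_def
    by (intro continuous_intros ode_solution_continuous_field[OF lip1 w] ode_solution_continuous_field[OF lip2 v])
  show ?thesis
    unfolding D_def[symmetric]
  proof (rule gronwall_short_interval[OF Dc T L])
    fix t assume t: "t \<in> {0..T}"
    have Dcont: "continuous_on {0..t} D" using t by (auto intro: continuous_on_subset[OF Dc])
    have "w t - v t = (y - x) + integral {0..t} k"
      using w v t unfolding ode_solution_def k_def
      by (simp add: integral_diff ode_solution_integrable[OF lip1 w] ode_solution_integrable[OF lip2 v])
    then have "D t \<le> norm (y - x) + norm (integral {0..t} k)"
      unfolding D_def by (simp add: norm_triangle_ineq)
    also have "norm (integral {0..t} k) \<le> integral {0..t} (\<lambda>r. L * D r + Q)"
      using t dev unfolding k_def D_def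
      by (intro integral_norm_bound_integral integrable_continuous_real continuous_intros
          continuous_on_subset[OF kc[unfolded k_def]] continuous_on_subset[OF Dc[unfolded D_def]]) auto
    also have "\<dots> = L * integral {0..t} D + Q * t"
      using t by (subst integral_add) (auto intro!: integrable_continuous_real continuous_intros Dcont)
    also have "Q * t \<le> Q * T" using t Q by (intro mult_left_mono) auto
    finally show "D t \<le> norm (y - x) + Q * T + L * integral {0..t} D" by simp
  qed (auto simp: D_def)
qed

lemma ode_solution_uniform_local_existence:
  fixes g :: "'a::euclidean_space \<Rightarrow> 'a"
  assumes lip: "lipschitz_on_bounded g" and B: "0 \<le> B"
  obtains \<delta> where "\<delta> > 0"
    "\<And>y. norm y \<le> B \<Longrightarrow> \<exists>w. ode_solution g y \<delta> w \<and> (\<forall>s\<in>{0..\<delta>}. norm (w s - y) \<le> 1)"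
proof -
  obtain L where L: "L > 0"
    "\<And>x y. norm x \<le> B + 1 \<Longrightarrow> norm y \<le> B + 1 \<Longrightarrow> norm (g x - g y) \<le> L * norm (x - y)"
    using lipschitz_on_boundedE[OF lip, of "B + 1"] B by auto
  define G where "G = L * (B + 1) + norm (g 0) + 1"
  have G: "G > 0" unfolding G_def using L B by (simp add: add_pos_nonneg)
  have gG: "norm (g v) \<le> G" if "norm v \<le> B + 1" for v
  proof -
    have "norm (g v) \<le> norm (g 0) + norm (g v - g 0)" by (rule norm_triangle_sub)
    also have "norm (g v - g 0) \<le> L * norm v" using L(2)[OF that, of 0] B by simp
    also have "L * norm v \<le> L * (B + 1)" using that L by (simp add: mult_left_mono)
    finally show ?thesis unfolding G_def by simp
  qed
  define \<delta> where "\<delta> = min (1 / G) (1 / (2 * L))"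
  have \<delta>: "\<delta> > 0" "\<delta> * G \<le> 1" "\<delta> * L \<le> 1/2"
    unfolding \<delta>_def using G L by (auto simp: min_def field_simps)
  have "\<exists>w. ode_solution g y \<delta> w \<and> (\<forall>s\<in>{0..\<delta>}. norm (w s - y) \<le> 1)" if y: "norm y \<le> B" for y
  proof -
    have ball: "norm v \<le> B + 1" if "v \<in> cball y 1" for v
      using that y norm_triangle_sub[of v y] by (auto simp: dist_norm norm_minus_commute)
    obtain w where w: "ode_solution g y \<delta> w" "\<And>s. s \<in> {0..\<delta>} \<Longrightarrow> norm (w s - y) \<le> G * s"
    proof (rule ode_solution_local_existence[OF L(1) G _ _ _ \<delta>(2,3)])
      show "norm (g v - g v') \<le> L * norm (v - v')" if "v \<in> cball y 1" "v' \<in> cball y 1" for v v'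
        using L(2) ball that by blast
      show "norm (g v) \<le> G" if "v \<in> cball y 1" for v
        using gG ball that by blast
    qed (use \<delta>(1) in auto)
    have "norm (w s - y) \<le> 1" if "s \<in> {0..\<delta>}" for s
    proof -
      have "G * s \<le> G * \<delta>" using that G by (intro mult_left_mono) auto
      then show ?thesis using w(2)[OF that] \<delta>(2) by (simp add: mult.commute)
    qed
    then show ?thesis using w by blast
  qed
  then show ?thesis using that \<delta>(1) by blast
qed

lemma ode_solution_append:
  assumes lip: "lipschitz_on_bounded g" and z: "ode_solution g x a z"
    and w: "ode_solution g (z a) \<delta> w" and a: "0 \<le> a" and \<delta>: "0 \<le> \<delta>"
  shows "ode_solution g x (a + \<delta>) (\<lambda>s. if s \<le> a then z s else w (s - a))"
    (is "ode_solution g x (a + \<delta>) ?Z")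
proof -
  have w0: "w 0 = z a" using ode_solution_initial[OF w \<delta>] .
  have Zc: "continuous_on {0..a + \<delta>} ?Z"
  proof (rule continuous_on_cases_le)
    show "continuous_on {s \<in> {0..a + \<delta>}. s \<le> a} z"
      using z unfolding ode_solution_def by (auto intro: continuous_on_subset)
    show "continuous_on {s \<in> {0..a + \<delta>}. a \<le> s} (\<lambda>s. w (s - a))"
    proof (rule continuous_on_compose2[of "{0..\<delta>}" w])
      show "continuous_on {0..\<delta>} w" using w unfolding ode_solution_def by blast
    qed (auto intro!: continuous_intros)
  qed (use w0 in \<open>auto intro!: continuous_intros\<close>)
  have hZc: "continuous_on {0..a + \<delta>} (\<lambda>r. g (?Z r))"
    using continuous_on_compose2[OF lipschitz_on_bounded_continuous_on[OF lip] Zc, of UNIV] by auto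
  show ?thesis
    unfolding ode_solution_def
  proof (intro conjI ballI Zc)
    fix s assume s: "s \<in> {0..a + \<delta>}"
    show "?Z s = x + integral {0..s} (\<lambda>r. g (?Z r))"
    proof (cases "s \<le> a")
      case True
      have "integral {0..s} (\<lambda>r. g (?Z r)) = integral {0..s} (\<lambda>r. g (z r))"
        by (rule integral_cong) (use True in auto)
      then show ?thesis using z s True unfolding ode_solution_def by auto
    next
      case False
      have sa: "s - a \<in> {0..\<delta>}" using s False by auto
      have "integral {0..s - a} (\<lambda>r. g (w r)) = integral {0..s - a} ((\<lambda>r. g (w (r - a))) \<circ> (+) a)"
        by (simp add: o_def)
      also have "\<dots> = integral {a..s} (\<lambda>r. g (w (r - a)))"
        using integral_shift_Icc_real[of 0 "s - a" _ a] by simp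
      also have "\<dots> = integral {a..s} (\<lambda>r. g (?Z r))"
        by (rule integral_cong) (auto simp: w0)
      finally have shifted: "integral {0..s - a} (\<lambda>r. g (w r)) = integral {a..s} (\<lambda>r. g (?Z r))" .
      have before: "integral {0..a} (\<lambda>r. g (z r)) = integral {0..a} (\<lambda>r. g (?Z r))"
        by (rule integral_cong) auto
      have "integral {0..a} (\<lambda>r. g (?Z r)) + integral {a..s} (\<lambda>r. g (?Z r)) = integral {0..s} (\<lambda>r. g (?Z r))"
        using False s a
        by (intro Henstock_Kurzweil_Integration.integral_combine integrable_continuous_real
            continuous_on_subset[OF hZc]) auto
      moreover have "w (s - a) = z a + integral {0..s - a} (\<lambda>r. g (w r))"
        using w sa unfolding ode_solution_def by blast
      moreover have "z a = x + integral {0..a} (\<lambda>r. g (z r))"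
        using z a unfolding ode_solution_def by auto
      ultimately show ?thesis using False shifted before by simp
    qed
  qed
qed

lemma continuous_on_atLeast_of_atLeastAtMost:
  fixes Z :: "real \<Rightarrow> 'a::metric_space"
  assumes "\<And>t. 0 \<le> t \<Longrightarrow> continuous_on {0..t} Z"
  shows "continuous_on {0..} Z"
  unfolding continuous_on_def
proof
  fix x :: real assume x: "x \<in> {0..}"
  then have "(Z \<longlongrightarrow> Z x) (at x within {0..x + 1})"
    using assms[of "x + 1"] unfolding continuous_on_def by auto
  moreover have "eventually (\<lambda>y. y \<in> {0..x + 1} \<longleftrightarrow> y \<in> {0..}) (at x)"
    unfolding eventually_at by (rule exI[of _ 1]) (auto simp: dist_real_def)
  ultimately show "(Z \<longlongrightarrow> Z x) (at x within {0..})" by (rule Lim_transform_within_set)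
qed

lemma ode_solution_cong:
  assumes "ode_solution g x T z" "\<And>s. s \<in> {0..T} \<Longrightarrow> z' s = z s"
  shows "ode_solution g x T z'"
proof -
  have "integral {0..t} (\<lambda>s. g (z' s)) = integral {0..t} (\<lambda>s. g (z s))" if "t \<in> {0..T}" for t
    using that assms(2) by (intro integral_cong) auto
  then show ?thesis
    using assms unfolding ode_solution_def by (auto intro: continuous_on_eq)
qed

lemma ode_solution_glue:
  assumes lip: "lipschitz_on_bounded g" and \<delta>: "\<delta> > 0"
    and F: "\<And>j. ode_solution g x (real j * \<delta>) (F j)"
  obtains Z where "\<And>t. 0 \<le> t \<Longrightarrow> ode_solution g x t Z"
    "\<And>j s. s \<in> {0..real j * \<delta>} \<Longrightarrow> Z s = F j s"
proof -
  have agree: "F j s = F j' s" if "s \<in> {0..real j * \<delta>}" "s \<in> {0..real j' * \<delta>}" for j j' s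
  proof -
    define m where "m = min (real j * \<delta>) (real j' * \<delta>)"
    have "ode_solution g x m (F j)" "ode_solution g x m (F j')"
      unfolding m_def by (auto intro: ode_solution_restrict[OF F])
    then show ?thesis using ode_solution_unique[OF lip] that unfolding m_def by auto
  qed
  define J where "J s = nat \<lceil>s / \<delta>\<rceil>" for s
  have J: "s \<le> real (J s) * \<delta>" if "0 \<le> s" for s
  proof -
    have "s / \<delta> \<le> real (J s)" unfolding J_def by linarith
    then show ?thesis using \<delta> by (simp add: field_simps)
  qed
  define Z where "Z s = F (J s) s" for s
  have Z: "Z s = F j s" if "s \<in> {0..real j * \<delta>}" for j s
    unfolding Z_def using agree[of s "J s" j] that J[of s] by auto
  have "ode_solution g x t Z" if t: "0 \<le> t" for t
  proof -
    have "ode_solution g x t (F (J t))" using ode_solution_restrict[OF F] J[OF t] by blast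
    then show ?thesis by (rule ode_solution_cong) (use Z J[OF t] in auto)
  qed
  then show ?thesis using that Z by blast
qed

text \<open>The a priori bound keeps every partial solution in the ball of radius \<open>B\<close>, so local
  solutions of a uniform length can be appended indefinitely.\<close>
lemma ode_solution_continuation:
  fixes g :: "'a::euclidean_space \<Rightarrow> 'a"
  assumes lip: "lipschitz_on_bounded g" and B: "0 \<le> B" and x: "norm x \<le> B"
    and bB: "\<And>s. 0 \<le> s \<Longrightarrow> b s \<le> B"
    and apriori: "\<And>t z. 0 \<le> t \<Longrightarrow> ode_solution g x t z \<Longrightarrow> (\<forall>s\<in>{0..t}. norm (z s) \<le> B + 1) \<Longrightarrow>
        \<forall>s\<in>{0..t}. norm (z s) \<le> b s"
  obtains z where "\<And>t. 0 \<le> t \<Longrightarrow> ode_solution g x t z" "\<And>s. 0 \<le> s \<Longrightarrow> norm (z s) \<le> b s"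
proof -
  obtain \<delta> where \<delta>: "\<delta> > 0"
    and local: "\<And>y. norm y \<le> B \<Longrightarrow> \<exists>w. ode_solution g y \<delta> w \<and> (\<forall>s\<in>{0..\<delta>}. norm (w s - y) \<le> 1)"
    using ode_solution_uniform_local_existence[OF lip B] by blast
  have "\<exists>z. ode_solution g x (real j * \<delta>) z \<and> (\<forall>s\<in>{0..real j * \<delta>}. norm (z s) \<le> b s)" for j
  proof (induction j)
    case 0
    have "ode_solution g x 0 (\<lambda>_. x)" unfolding ode_solution_def by auto
    moreover from apriori[OF _ this] have "\<forall>s\<in>{0..0}. norm x \<le> b s" using x by auto
    ultimately show ?case by auto
  next
    case (Suc j)
    then obtain z where z: "ode_solution g x (real j * \<delta>) z" "\<forall>s\<in>{0..real j * \<delta>}. norm (z s) \<le> b s"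
      by blast
    define a where "a = real j * \<delta>"
    have a: "0 \<le> a" unfolding a_def using \<delta> by simp
    have "norm (z a) \<le> b a" using z(2) a unfolding a_def by auto
    then have za: "norm (z a) \<le> B" using bB[OF a] by linarith
    obtain w where w: "ode_solution g (z a) \<delta> w" "\<forall>s\<in>{0..\<delta>}. norm (w s - z a) \<le> 1"
      using local[OF za] by blast
    define Z where "Z s = (if s \<le> a then z s else w (s - a))" for s
    have Z: "ode_solution g x (a + \<delta>) Z"
      unfolding Z_def using ode_solution_append[OF lip z(1)[folded a_def] w(1) a] \<delta> by simp
    have "norm (Z s) \<le> B + 1" if s: "s \<in> {0..a + \<delta>}" for s
    proof (cases "s \<le> a")
      case True
      then have "norm (z s) \<le> b s" using z(2) s unfolding a_def by auto
      then show ?thesis using True s bB[of s] unfolding Z_def by simp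
    next
      case False
      then have "norm (w (s - a) - z a) \<le> 1" using w(2) s by auto
      then show ?thesis using False za norm_triangle_sub[of "w (s - a)" "z a"] unfolding Z_def by simp
    qed
    then have "\<forall>s\<in>{0..a + \<delta>}. norm (Z s) \<le> b s" using apriori[OF _ Z] a \<delta> by simp
    moreover have "real (Suc j) * \<delta> = a + \<delta>" unfolding a_def by (simp add: algebra_simps)
    ultimately show ?case using Z by auto
  qed
  then obtain F where F: "\<And>j. ode_solution g x (real j * \<delta>) (F j)"
    and Fb: "\<And>j s. s \<in> {0..real j * \<delta>} \<Longrightarrow> norm (F j s) \<le> b s"
    by metis
  obtain Z where Z: "\<And>t. 0 \<le> t \<Longrightarrow> ode_solution g x t Z" "\<And>j s. s \<in> {0..real j * \<delta>} \<Longrightarrow> Z s = F j s"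
    using ode_solution_glue[OF lip \<delta> F] by blast
  have "norm (Z s) \<le> b s" if s: "0 \<le> s" for s
  proof -
    obtain j :: nat where "s / \<delta> \<le> real j" using real_arch_simple by blast
    then have "s \<in> {0..real j * \<delta>}" using s \<delta> by (simp add: field_simps)
    then show ?thesis using Z(2) Fb by metis
  qed
  then show ?thesis using that Z(1) by blast
qed

lemma ct_sol_iff_ode_solution: "ct_sol h x z \<longleftrightarrow> (\<forall>t\<ge>0. ode_solution h x t z)"
proof
  assume "ct_sol h x z"
  then show "\<forall>t\<ge>0. ode_solution h x t z"
    unfolding ct_sol_def ode_solution_def by (auto intro: continuous_on_subset)
next
  assume sol: "\<forall>t\<ge>0. ode_solution h x t z"
  then have "continuous_on {0..} z"
    unfolding ode_solution_def by (intro continuous_on_atLeast_of_atLeastAtMost) auto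
  moreover have "z t = x + integral {0..t} (\<lambda>s. h (z s))" if "0 \<le> t" for t
    using sol that unfolding ode_solution_def by auto
  ultimately show "ct_sol h x z" unfolding ct_sol_def by blast
qed

section \<open>Trajectories under varying sampling rates\<close>

lemma dt_traj_add:
  "dt_traj Fb x Ts (p + i) = dt_traj Fb (dt_traj Fb x Ts p) (\<lambda>i. Ts (p + i)) i"
  by (induction i) auto

lemma sum_lessThan_add:
  fixes Ts :: "nat \<Rightarrow> 'a::comm_monoid_add"
  shows "(\<Sum>i<p + q. Ts i) = (\<Sum>i<p. Ts i) + (\<Sum>i<q. Ts (p + i))"
  by (induction q) (auto simp: algebra_simps)

lemma Phi_shift: "Ts \<in> Phi T \<Longrightarrow> (\<lambda>i. Ts (p + i)) \<in> Phi T"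
  unfolding Phi_def by auto

lemma Phi_mono: "T \<le> T' \<Longrightarrow> Phi T \<subseteq> Phi T'"
  unfolding Phi_def using less_le_trans by blast

lemma Phi_const: "0 < s \<Longrightarrow> s < T \<Longrightarrow> (\<lambda>_. s) \<in> Phi T"
  unfolding Phi_def by simp

lemma Phi_sum_nonneg: "Ts \<in> Phi T \<Longrightarrow> 0 \<le> (\<Sum>i<k. Ts i)"
  unfolding Phi_def by (auto intro: sum_nonneg less_imp_le)

text \<open>Restarting a trajectory at the first sampling instant after time \<open>\<tau>\<close>; with sampling
  periods below 1 that instant lies in \<open>[\<tau>, \<tau> + 1]\<close>.\<close>
lemma Phi_first_crossing:
  fixes Ts :: "nat \<Rightarrow> real"
  assumes Ts: "Ts \<in> Phi Tst" and Tst: "Tst \<le> 1" and \<tau>: "0 < \<tau>" and k: "\<tau> \<le> (\<Sum>i<k. Ts i)"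
  obtains p where "p \<le> k" "0 < p" "\<tau> \<le> (\<Sum>i<p. Ts i)" "(\<Sum>i<p. Ts i) \<le> \<tau> + 1"
    "dt_traj Fb x Ts k = dt_traj Fb (dt_traj Fb x Ts p) (\<lambda>i. Ts (p + i)) (k - p)"
    "(\<Sum>i<k. Ts i) = (\<Sum>i<p. Ts i) + (\<Sum>i<k - p. Ts (p + i))"
proof -
  define p where "p = (LEAST i. \<tau> \<le> (\<Sum>i<i. Ts i))"
  have p1: "\<tau> \<le> (\<Sum>i<p. Ts i)" unfolding p_def by (rule LeastI[of _ k]) (rule k)
  have p2: "p \<le> k" unfolding p_def by (rule Least_le) (rule k)
  have p3: "0 < p" using p1 \<tau> by (cases p) auto
  have "\<not> \<tau> \<le> (\<Sum>i<p - 1. Ts i)" unfolding p_def by (rule not_less_Least) (use p3 p_def in auto)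
  moreover have "(\<Sum>i<p. Ts i) = (\<Sum>i<p - 1. Ts i) + Ts (p - 1)"
    using p3 by (metis Suc_diff_1 sum.lessThan_Suc)
  moreover have "Ts (p - 1) < 1" using Ts Tst unfolding Phi_def by (auto intro: less_le_trans)
  ultimately have p4: "(\<Sum>i<p. Ts i) \<le> \<tau> + 1" by linarith
  have kp: "k = p + (k - p)" using p2 by simp
  show ?thesis
  proof (rule that[OF p2 p3 p1 p4])
    show "dt_traj Fb x Ts k = dt_traj Fb (dt_traj Fb x Ts p) (\<lambda>i. Ts (p + i)) (k - p)"
      by (subst kp) (rule dt_traj_add)
    show "(\<Sum>i<k. Ts i) = (\<Sum>i<p. Ts i) + (\<Sum>i<k - p. Ts (p + i))"
      by (subst kp) (rule sum_lessThan_add)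
  qed
qed

lemma dt_halving_over_windows:
  fixes Fb :: "'a::real_normed_vector \<Rightarrow> real \<Rightarrow> 'a"
  assumes c: "0 \<le> c" and \<tau>: "0 < \<tau>" and Tst: "Tst \<le> 1"
    and W: "\<And>Ts y k. Ts \<in> Phi Tst \<Longrightarrow> norm y \<le> R \<Longrightarrow> (\<Sum>i<k. Ts i) \<le> \<tau> + 1 \<Longrightarrow>
        norm (dt_traj Fb y Ts k) \<le> c * norm y \<and>
        (\<tau> \<le> (\<Sum>i<k. Ts i) \<longrightarrow> norm (dt_traj Fb y Ts k) \<le> norm y / 2)"
  shows "Ts \<in> Phi Tst \<Longrightarrow> norm x \<le> R \<Longrightarrow> real j * (\<tau> + 1) \<le> (\<Sum>i<k. Ts i) \<Longrightarrow>
    norm (dt_traj Fb x Ts k) \<le> c * norm x / 2 ^ j"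
proof (induction k arbitrary: Ts x j rule: less_induct)
  case (less k)
  note Ts = less.prems(1) and x = less.prems(2) and j = less.prems(3)
  show ?case
  proof (cases "\<tau> \<le> (\<Sum>i<k. Ts i)")
    case False
    then have "real j * (\<tau> + 1) < \<tau> + 1" using j by linarith
    then have "j = 0" using \<tau> by (simp add: mult_less_cancel_right2)
    then show ?thesis using W[OF Ts x, of k] False by simp
  next
    case True
    obtain p where p: "p \<le> k" "0 < p" "\<tau> \<le> (\<Sum>i<p. Ts i)" "(\<Sum>i<p. Ts i) \<le> \<tau> + 1"
      and traj: "dt_traj Fb x Ts k = dt_traj Fb (dt_traj Fb x Ts p) (\<lambda>i. Ts (p + i)) (k - p)"
      and sums: "(\<Sum>i<k. Ts i) = (\<Sum>i<p. Ts i) + (\<Sum>i<k - p. Ts (p + i))"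
      using Phi_first_crossing[OF Ts Tst \<tau> True] by metis
    define y where "y = dt_traj Fb x Ts p"
    have half: "norm y \<le> norm x / 2" unfolding y_def using W[OF Ts x p(4)] p(3) by blast
    then have y: "norm y \<le> R" using x norm_ge_zero[of x] by linarith
    have lt: "k - p < k" using p by simp
    show ?thesis
    proof (cases j)
      case 0
      have "norm (dt_traj Fb y (\<lambda>i. Ts (p + i)) (k - p)) \<le> c * norm y"
        using less.IH[OF lt Phi_shift[OF Ts, of p] y, of 0] Phi_sum_nonneg[OF Phi_shift[OF Ts, of p]] by simp
      also have "\<dots> \<le> c * norm x"
        using half norm_ge_zero[of y] c by (intro mult_left_mono) linarith+
      finally show ?thesis using 0 traj y_def by simp
    next
      case (Suc j')
      have "real j' * (\<tau> + 1) \<le> (\<Sum>i<k - p. Ts (p + i))"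
        using j sums p(4) Suc by (simp add: algebra_simps)
      then have "norm (dt_traj Fb y (\<lambda>i. Ts (p + i)) (k - p)) \<le> c * norm y / 2 ^ j'"
        using less.IH[OF lt Phi_shift[OF Ts, of p] y] by blast
      also have "\<dots> \<le> c * (norm x / 2) / 2 ^ j'" using half c by (intro divide_right_mono mult_left_mono) auto
      also have "\<dots> = c * norm x / 2 ^ j" using Suc by simp
      finally show ?thesis using traj y_def by simp
    qed
  qed
qed

lemma dt_exp_bound_of_window_halving:
  fixes Fb :: "'a::real_normed_vector \<Rightarrow> real \<Rightarrow> 'a"
  assumes c: "0 \<le> c" and \<tau>: "0 < \<tau>" and Tst: "Tst \<le> 1"
    and W: "\<And>Ts y k. Ts \<in> Phi Tst \<Longrightarrow> norm y \<le> R \<Longrightarrow> (\<Sum>i<k. Ts i) \<le> \<tau> + 1 \<Longrightarrow>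
        norm (dt_traj Fb y Ts k) \<le> c * norm y \<and>
        (\<tau> \<le> (\<Sum>i<k. Ts i) \<longrightarrow> norm (dt_traj Fb y Ts k) \<le> norm y / 2)"
    and Ts: "Ts \<in> Phi Tst" and x: "norm x \<le> R"
  shows "norm (dt_traj Fb x Ts k) \<le> 2 * c * norm x * exp (- (ln 2 / (\<tau> + 1)) * (\<Sum>i<k. Ts i))"
proof -
  define t where "t = (\<Sum>i<k. Ts i)"
  have t0: "0 \<le> t" unfolding t_def by (rule Phi_sum_nonneg[OF Ts])
  define j where "j = nat \<lfloor>t / (\<tau> + 1)\<rfloor>"
  have "real j \<le> t / (\<tau> + 1)" unfolding j_def using t0 \<tau> by simp
  then have jle: "real j * (\<tau> + 1) \<le> t" using \<tau> by (simp add: field_simps)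
  have jgt: "t / (\<tau> + 1) - 1 \<le> real j" unfolding j_def using t0 \<tau> by linarith
  have "norm (dt_traj Fb x Ts k) \<le> c * norm x / 2 ^ j"
    using dt_halving_over_windows[OF c \<tau> Tst W Ts x jle[unfolded t_def]] by blast
  also have "1 / (2::real) ^ j \<le> 2 * exp (- (ln 2 / (\<tau> + 1)) * t)"
  proof -
    have "1 / (2::real) ^ j = exp (- (real j * ln 2))" by (simp add: exp_minus exp_of_nat_mult divide_inverse)
    also have "\<dots> \<le> exp (- ((t / (\<tau> + 1) - 1) * ln 2))" using jgt by (simp add: mult_right_mono)
    also have "\<dots> = 2 * exp (- (ln 2 / (\<tau> + 1)) * t)"
      by (simp add: algebra_simps exp_add exp_diff exp_minus divide_inverse)
    finally show ?thesis .
  qed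
  then have "c * norm x / 2 ^ j \<le> c * norm x * (2 * exp (- (ln 2 / (\<tau> + 1)) * t))"
    using c by (metis mult_left_mono mult_nonneg_nonneg norm_ge_zero times_divide_eq_right mult_1_right)
  finally show ?thesis unfolding t_def by (simp add: algebra_simps)
qed

text \<open>After the first window the trajectory is trapped in the ball of radius \<open>R\<close>.\<close>
lemma dt_practical_bound_of_window:
  fixes Fb :: "'a::real_normed_vector \<Rightarrow> real \<Rightarrow> 'a"
  assumes \<tau>: "0 < \<tau>" and Tst: "Tst \<le> 1"
    and W1: "\<And>Ts y k. Ts \<in> Phi Tst \<Longrightarrow> norm y \<le> M \<Longrightarrow> (\<Sum>i<k. Ts i) \<le> \<tau> + 1 \<Longrightarrow>
        norm (dt_traj Fb y Ts k) \<le> \<beta> (norm y) (\<Sum>i<k. Ts i) + R \<and>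
        (\<tau> \<le> (\<Sum>i<k. Ts i) \<longrightarrow> norm (dt_traj Fb y Ts k) \<le> \<nu>)"
    and W2: "\<And>Ts y k. Ts \<in> Phi Tst \<Longrightarrow> norm y \<le> \<nu> \<Longrightarrow> (\<Sum>i<k. Ts i) \<le> \<tau> + 1 \<Longrightarrow>
        norm (dt_traj Fb y Ts k) \<le> R \<and> (\<tau> \<le> (\<Sum>i<k. Ts i) \<longrightarrow> norm (dt_traj Fb y Ts k) \<le> \<nu>)"
    and \<beta>: "\<And>r t. 0 \<le> r \<Longrightarrow> 0 \<le> t \<Longrightarrow> 0 \<le> \<beta> r t"
    and Ts: "Ts \<in> Phi Tst" and x: "norm x \<le> M"
  shows "norm (dt_traj Fb x Ts k) \<le> \<beta> (norm x) (\<Sum>i<k. Ts i) + R"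
proof -
  have trapped: "Ts \<in> Phi Tst \<Longrightarrow> norm y \<le> \<nu> \<Longrightarrow> norm (dt_traj Fb y Ts k) \<le> R" for Ts y k
  proof (induction k arbitrary: Ts y rule: less_induct)
    case (less k)
    show ?case
    proof (cases "\<tau> \<le> (\<Sum>i<k. Ts i)")
      case False
      then show ?thesis using W2[OF less.prems, of k] by simp
    next
      case True
      obtain p where p: "p \<le> k" "0 < p" "\<tau> \<le> (\<Sum>i<p. Ts i)" "(\<Sum>i<p. Ts i) \<le> \<tau> + 1"
        and traj: "dt_traj Fb y Ts k = dt_traj Fb (dt_traj Fb y Ts p) (\<lambda>i. Ts (p + i)) (k - p)"
        using Phi_first_crossing[OF less.prems(1) Tst \<tau> True] by metis
      have "norm (dt_traj Fb y Ts p) \<le> \<nu>" using W2[OF less.prems p(4)] p(3) by blast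
      then show ?thesis using less.IH[of "k - p", OF _ Phi_shift[OF less.prems(1)]] p traj by simp
    qed
  qed
  show ?thesis
  proof (cases "\<tau> \<le> (\<Sum>i<k. Ts i)")
    case False
    then show ?thesis using W1[OF Ts x, of k] by simp
  next
    case True
    obtain p where p: "p \<le> k" "0 < p" "\<tau> \<le> (\<Sum>i<p. Ts i)" "(\<Sum>i<p. Ts i) \<le> \<tau> + 1"
      and traj: "dt_traj Fb x Ts k = dt_traj Fb (dt_traj Fb x Ts p) (\<lambda>i. Ts (p + i)) (k - p)"
      using Phi_first_crossing[OF Ts Tst \<tau> True] by metis
    have "norm (dt_traj Fb x Ts p) \<le> \<nu>" using W1[OF Ts x p(4)] p(3) by blast
    then have "norm (dt_traj Fb x Ts k) \<le> R" using trapped[OF Phi_shift[OF Ts]] traj by simp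
    moreover have "0 \<le> \<beta> (norm x) (\<Sum>i<k. Ts i)" using \<beta> Phi_sum_nonneg[OF Ts] by simp
    ultimately show ?thesis by linarith
  qed
qed

lemma exp_growth_step:
  fixes c e t T K :: real
  assumes "0 \<le> c" "0 \<le> T" "0 \<le> K" "0 \<le> t" "e \<le> c * t * exp (K * t)"
  shows "e * (1 + K * T) + T * c \<le> c * (t + T) * exp (K * (t + T))"
proof -
  have "e * (1 + K * T) \<le> c * t * exp (K * t) * (1 + K * T)"
    using assms by (intro mult_right_mono) auto
  also have "\<dots> \<le> c * t * exp (K * t) * exp (K * T)"
    using assms by (intro mult_left_mono) auto
  also have "\<dots> = c * t * exp (K * (t + T))" by (simp add: distrib_left exp_add)
  finally have "e * (1 + K * T) \<le> c * t * exp (K * (t + T))" .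
  moreover have "T * c \<le> T * c * exp (K * (t + T))"
    using assms mult_left_mono[of 1 "exp (K * (t + T))" "T * c"] by simp
  ultimately show ?thesis by (simp add: algebra_simps)
qed

text \<open>Discrete Gronwall estimate for the sampling error: it stays below 1 up to time \<open>\<tau>\<close>,
  which is what licenses each further one-step estimate.\<close>
lemma sampled_error_accumulation:
  fixes e Ts :: "nat \<Rightarrow> real"
  assumes c: "0 \<le> c" and K: "0 \<le> K" and Ts: "\<And>i. 0 \<le> Ts i" and e0: "e 0 = 0"
    and small: "c * \<tau> * exp (K * \<tau>) \<le> 1"
    and step: "\<And>k. e k \<le> 1 \<Longrightarrow> (\<Sum>i<Suc k. Ts i) \<le> \<tau> \<Longrightarrow> e (Suc k) \<le> e k * (1 + K * Ts k) + Ts k * c"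
  shows "(\<Sum>i<k. Ts i) \<le> \<tau> \<Longrightarrow> e k \<le> c * (\<Sum>i<k. Ts i) * exp (K * (\<Sum>i<k. Ts i))"
proof (induction k)
  case 0
  then show ?case using e0 by simp
next
  case (Suc k)
  define t where "t = (\<Sum>i<k. Ts i)"
  have t0: "0 \<le> t" unfolding t_def using Ts by (simp add: sum_nonneg)
  have tS: "(\<Sum>i<Suc k. Ts i) = t + Ts k" unfolding t_def by simp
  have tk: "t \<le> \<tau>" using Suc.prems tS Ts[of k] by linarith
  have IH: "e k \<le> c * t * exp (K * t)" using Suc.IH tk unfolding t_def by blast
  also have "\<dots> \<le> c * \<tau> * exp (K * \<tau>)" using c t0 tk K by (intro mult_mono) (auto intro: mult_left_mono)
  finally have "e k \<le> 1" using small by linarith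
  then have "e (Suc k) \<le> e k * (1 + K * Ts k) + Ts k * c" using step Suc.prems by blast
  also have "\<dots> \<le> c * (t + Ts k) * exp (K * (t + Ts k))"
    by (rule exp_growth_step[OF c Ts K t0 IH])
  finally show ?case using tS by simp
qed

lemma class_K_nonneg:
  assumes "class_K \<rho>" "0 \<le> T"
  shows "0 \<le> \<rho> T"
proof (cases "T = 0")
  case True
  then show ?thesis using assms unfolding class_K_def by simp
next
  case False
  have "strict_mono_on {0..} \<rho>" "\<rho> 0 = 0" using assms unfolding class_K_def by auto
  then show ?thesis using False assms(2) by (metis atLeast_iff less_eq_real_def order_refl strict_mono_onD)
qed

lemma class_K_tendsto_0:
  assumes "class_K \<rho>"
  shows "(\<rho> \<longlongrightarrow> 0) (at_right 0)"
proof -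
  have "continuous_on {0..} \<rho>" "\<rho> 0 = 0" using assms unfolding class_K_def by auto
  then have "(\<rho> \<longlongrightarrow> 0) (at 0 within {0..})"
    by (metis atLeast_iff continuous_on_def order_refl)
  then show ?thesis by (rule tendsto_within_subset) auto
qed

lemma class_KL_nonneg: "class_KL \<beta> \<Longrightarrow> 0 \<le> r \<Longrightarrow> 0 \<le> t \<Longrightarrow> 0 \<le> \<beta> r t"
  unfolding class_KL_def using class_K_nonneg by blast

lemma class_KL_mono:
  assumes "class_KL \<beta>" "0 \<le> r" "r \<le> r'" "0 \<le> t"
  shows "\<beta> r t \<le> \<beta> r' t"
proof (cases "r = r'")
  case False
  have "strict_mono_on {0..} (\<lambda>r. \<beta> r t)" using assms unfolding class_KL_def class_K_def by blast
  then have "\<beta> r t < \<beta> r' t" using assms False by (intro strict_mono_onD[of "{0..}" "\<lambda>r. \<beta> r t"]) auto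
  then show ?thesis by simp
qed simp

lemma class_KL_antimono:
  assumes "class_KL \<beta>" "0 \<le> r" "0 \<le> t" "t \<le> t'"
  shows "\<beta> r t' \<le> \<beta> r t"
proof -
  have "antimono_on {0..} (\<lambda>t. \<beta> r t)" using assms unfolding class_KL_def by blast
  then show ?thesis using assms by (auto intro: monotone_onD)
qed

section \<open>The sampled-data system\<close>

lemma one_step_bound_rearranged:
  fixes Lf Lc Lh P e Q T \<rho>T :: real
  assumes "0 \<le> e" "0 \<le> P" "0 < T" "T * Lf \<le> 1/2" "0 < Lf" "0 < Lc" "0 < Lh" "0 \<le> \<rho>T" "\<rho>T \<le> 1"
    and Q: "Q = Lf * (\<rho>T * (P + e) + Lc * (e + Lh * P * T))"
  shows "(e + Q * T) * (1 + 2 * Lf * T) \<le> e * (1 + 2 * Lf * (2 + Lc) * T) + T * (2 * Lf * (\<rho>T + Lc * Lh * T)) * P"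
proof -
  define A where "A = T * Lf"
  have A: "0 \<le> A" "A \<le> 1/2" using assms unfolding A_def by auto
  have QT: "Q * T = e * (A * (\<rho>T + Lc)) + A * P * (\<rho>T + Lc * Lh * T)"
    unfolding Q A_def by (simp add: algebra_simps)
  have t1: "(1 + A * (\<rho>T + Lc)) * (1 + 2 * A) \<le> 1 + 4 * A + 2 * A * Lc"
  proof -
    have "(1 + A * (\<rho>T + Lc)) * (1 + 2 * A) = 1 + 2 * A + A * (\<rho>T + Lc) + (2 * A) * (A * (\<rho>T + Lc))"
      by (simp add: algebra_simps)
    also have "(2 * A) * (A * (\<rho>T + Lc)) \<le> 1 * (A * (\<rho>T + Lc))"
      using A assms by (intro mult_right_mono) auto
    also have "A * (\<rho>T + Lc) \<le> A * (1 + Lc)" using A assms by (intro mult_left_mono) auto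
    finally show ?thesis by (simp add: algebra_simps)
  qed
  have t2: "A * P * (\<rho>T + Lc * Lh * T) * (1 + 2 * A) \<le> A * P * (\<rho>T + Lc * Lh * T) * 2"
    using A assms by (intro mult_left_mono) auto
  have "(e + Q * T) * (1 + 2 * Lf * T)
      = e * ((1 + A * (\<rho>T + Lc)) * (1 + 2 * A)) + A * P * (\<rho>T + Lc * Lh * T) * (1 + 2 * A)"
    unfolding QT A_def by (simp add: algebra_simps)
  also have "\<dots> \<le> e * (1 + 4 * A + 2 * A * Lc) + A * P * (\<rho>T + Lc * Lh * T) * 2"
    using add_mono[OF mult_left_mono[OF t1] t2] assms by simp
  also have "\<dots> = e * (1 + 2 * Lf * (2 + Lc) * T) + T * (2 * Lf * (\<rho>T + Lc * Lh * T)) * P"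
    unfolding A_def by (simp add: algebra_simps)
  finally show ?thesis .
qed

locale sampled_data_system =
  fixes f :: "real^'n \<Rightarrow> real^'m \<Rightarrow> real^'n" and U :: "real^'n \<Rightarrow> real \<Rightarrow> real^'m"
  assumes plant: "assumption1 f" and ct_control: "assumption2 (\<lambda>x. U x 0)"
    and stl: "StL U" and stc: "StC (\<lambda>x T. U x 0) U"
begin

definition uc :: "real^'n \<Rightarrow> real^'m" where "uc x = U x 0"
definition h :: "real^'n \<Rightarrow> real^'n" where "h x = f x (uc x)"
definition Fb :: "real^'n \<Rightarrow> real \<Rightarrow> real^'n" where "Fb x T = Fe f x (U x T) T"

lemma f_zero: "f 0 0 = 0"
  using plant unfolding assumption1_def by blast

lemma uc_zero: "uc 0 = 0"
  using ct_control unfolding assumption2_def uc_def by blast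

lemma h_zero: "h 0 = 0"
  unfolding h_def using f_zero uc_zero by simp

lemma f_lipschitz:
  assumes "0 \<le> M" "0 \<le> Mu"
  obtains Lf where "Lf > 0" "\<And>x y u v. norm x \<le> M \<Longrightarrow> norm y \<le> M \<Longrightarrow> norm u \<le> Mu \<Longrightarrow> norm v \<le> Mu \<Longrightarrow>
    norm (f x u - f y v) \<le> Lf * (norm (x - y) + norm (u - v))"
proof -
  obtain Lf where "Lf > 0" "\<forall>x y u v. norm x \<le> M \<and> norm y \<le> M \<and> norm u \<le> Mu \<and> norm v \<le> Mu \<longrightarrow>
      norm (f x u - f y v) \<le> Lf * (norm (x - y) + norm (u - v))"
    using plant[unfolded assumption1_def, THEN conjunct2, rule_format, OF assms] by blast
  then show ?thesis using that by blast
qed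

lemma uc_lipschitz:
  assumes "0 \<le> M"
  obtains Lc where "Lc > 0" "\<And>x y. norm x \<le> M \<Longrightarrow> norm y \<le> M \<Longrightarrow> norm (uc x - uc y) \<le> Lc * norm (x - y)"
proof -
  obtain Lc where "Lc > 0" "\<forall>x y. norm x \<le> M \<and> norm y \<le> M \<longrightarrow> norm (U x 0 - U y 0) \<le> Lc * norm (x - y)"
    using ct_control[unfolded assumption2_def, THEN conjunct2, rule_format, OF assms] by blast
  then show ?thesis using that unfolding uc_def by blast
qed

lemma U_lipschitz:
  assumes "0 \<le> M"
  obtains KU TU where "KU > 0" "TU > 0"
    "\<And>x y T. norm x \<le> M \<Longrightarrow> norm y \<le> M \<Longrightarrow> 0 \<le> T \<Longrightarrow> T < TU \<Longrightarrow> norm (U x T - U y T) \<le> KU * norm (x - y)"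
    "\<And>T. 0 \<le> T \<Longrightarrow> T < TU \<Longrightarrow> U 0 T = 0"
proof -
  obtain K Tst :: "real \<Rightarrow> real" where KT: "K M > 0" "Tst M > 0"
    "\<forall>x y T. norm x \<le> M \<and> norm y \<le> M \<and> 0 \<le> T \<and> T < Tst M \<longrightarrow>
       U 0 T = 0 \<and> norm (U x T - U y T) \<le> K M * norm (x - y)"
    using stl[unfolded StL_def] assms by blast
  show ?thesis
  proof (rule that[OF KT(1,2)])
    show "U 0 T = 0" if "0 \<le> T" "T < Tst M" for T
      using KT(3)[rule_format, of 0 0 T] that assms by simp
  qed (use KT(3) in blast)
qed

lemma U_consistent:
  assumes "0 \<le> M"
  obtains \<rho> T\<rho> where "class_K \<rho>" "T\<rho> > 0"
    "\<And>x T. norm x \<le> M \<Longrightarrow> 0 \<le> T \<Longrightarrow> T < T\<rho> \<Longrightarrow> norm (U x T - uc x) \<le> \<rho> T * norm x"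
proof -
  obtain \<rho> T\<rho> where "class_Kinf \<rho>" "T\<rho> > 0"
    "\<forall>x T. norm x \<le> M \<and> 0 \<le> T \<and> T < T\<rho> \<longrightarrow> norm (U x 0 - U x T) \<le> \<rho> T * norm x"
    using stc assms unfolding StC_def by blast
  then show ?thesis
    using that[of \<rho> T\<rho>] unfolding class_Kinf_def uc_def by (auto simp: norm_minus_commute)
qed

lemma lipschitz_on_bounded_h: "lipschitz_on_bounded h"
  unfolding lipschitz_on_bounded_def
proof (intro allI impI)
  fix M :: real assume M: "0 \<le> M"
  obtain Lc where Lc: "Lc > 0" "\<And>x y. norm x \<le> M \<Longrightarrow> norm y \<le> M \<Longrightarrow> norm (uc x - uc y) \<le> Lc * norm (x - y)"
    using uc_lipschitz[OF M] by blast
  have uc_bound: "norm (uc x) \<le> Lc * M" if "norm x \<le> M" for x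
  proof -
    have "norm (uc x) \<le> Lc * norm x" using Lc(2)[OF that, of 0] M uc_zero by simp
    also have "\<dots> \<le> Lc * M" using that Lc(1) by (simp add: mult_left_mono)
    finally show ?thesis .
  qed
  have "0 \<le> Lc * M" using Lc(1) M by simp
  then obtain Lf where Lf: "Lf > 0" "\<And>x y u v. norm x \<le> M \<Longrightarrow> norm y \<le> M \<Longrightarrow> norm u \<le> Lc * M \<Longrightarrow>
      norm v \<le> Lc * M \<Longrightarrow> norm (f x u - f y v) \<le> Lf * (norm (x - y) + norm (u - v))"
    using f_lipschitz[OF M] by blast
  show "\<exists>L>0. \<forall>x y. norm x \<le> M \<and> norm y \<le> M \<longrightarrow> norm (h x - h y) \<le> L * norm (x - y)"
  proof (intro exI[of _ "Lf * (1 + Lc)"] conjI allI impI)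
    fix x y :: "real^'n" assume xy: "norm x \<le> M \<and> norm y \<le> M"
    then have "norm (h x - h y) \<le> Lf * (norm (x - y) + norm (uc x - uc y))"
      unfolding h_def by (intro Lf(2) uc_bound) auto
    also have "\<dots> \<le> Lf * (norm (x - y) + Lc * norm (x - y))"
      using Lc(2) xy Lf(1) by (simp add: mult_left_mono)
    finally show "norm (h x - h y) \<le> Lf * (1 + Lc) * norm (x - y)" by (simp add: algebra_simps)
  qed (use Lc Lf in simp)
qed

lemma lipschitz_on_bounded_f: "lipschitz_on_bounded (\<lambda>x. f x u)"
  unfolding lipschitz_on_bounded_def
proof (intro allI impI)
  fix M :: real assume M: "0 \<le> M"
  obtain L where L: "L > 0" "\<And>x y u' v. norm x \<le> M \<Longrightarrow> norm y \<le> M \<Longrightarrow> norm u' \<le> norm u \<Longrightarrow>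
      norm v \<le> norm u \<Longrightarrow> norm (f x u' - f y v) \<le> L * (norm (x - y) + norm (u' - v))"
    using f_lipschitz[OF M norm_ge_zero[of u]] by metis
  show "\<exists>L>0. \<forall>x y. norm x \<le> M \<and> norm y \<le> M \<longrightarrow> norm (f x u - f y u) \<le> L * norm (x - y)"
  proof (intro exI[of _ L] conjI allI impI)
    fix x y :: "real^'n" assume "norm x \<le> M \<and> norm y \<le> M"
    then show "norm (f x u - f y u) \<le> L * norm (x - y)" using L(2)[of x y u u] by simp
  qed (rule L(1))
qed

lemma Fe_eq_ode_solution:
  assumes z: "ode_solution (\<lambda>x. f x u) x T z" and T: "0 \<le> T"
  shows "Fe f x u T = z T"
proof -
  have sol: "ode_sol f u x T z' \<longleftrightarrow> ode_solution (\<lambda>x. f x u) x T z'" for z'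
    unfolding ode_sol_def ode_solution_def ..
  have "z' T = z T" if "ode_sol f u x T z'" for z'
    using ode_solution_unique[OF lipschitz_on_bounded_f _ z] that T unfolding sol by simp
  then have "(THE y. \<exists>z'. ode_sol f u x T z' \<and> z' T = y) = z T"
    using z unfolding sol[symmetric] by (intro the_equality) blast+
  then show ?thesis unfolding Fe_def .
qed

lemma exact_step_solution:
  assumes B: "0 \<le> B" and Mu: "0 \<le> Mu" and Lf: "Lf > 0"
    and f_lip: "\<And>x y u v. norm x \<le> B + 2 \<Longrightarrow> norm y \<le> B + 2 \<Longrightarrow> norm u \<le> Mu \<Longrightarrow> norm v \<le> Mu \<Longrightarrow>
        norm (f x u - f y v) \<le> Lf * (norm (x - y) + norm (u - v))"
    and y: "norm y \<le> B + 1" and u: "norm u \<le> Mu"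
    and T: "0 \<le> T" "T * (Lf * (B + 2 + Mu)) \<le> 1" "T * Lf \<le> 1/2"
  obtains w where "ode_solution (\<lambda>x. f x u) y T w" "Fe f y u T = w T"
    "\<And>t. t \<in> {0..T} \<Longrightarrow> norm (w t) \<le> B + 2"
proof -
  define G where "G = Lf * (B + 2 + Mu)"
  have G: "G > 0" unfolding G_def using Lf B Mu by simp
  have ball: "norm v \<le> B + 2" if "v \<in> cball y 1" for v
    using that y norm_triangle_sub[of v y] by (auto simp: dist_norm norm_minus_commute)
  obtain w where w: "ode_solution (\<lambda>x. f x u) y T w" and drift: "\<And>t. t \<in> {0..T} \<Longrightarrow> norm (w t - y) \<le> G * t"
  proof (rule ode_solution_local_existence[OF Lf G _ _ T(1) T(2)[folded G_def] T(3)])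
    show "norm (f v u - f v' u) \<le> Lf * norm (v - v')" if "v \<in> cball y 1" "v' \<in> cball y 1" for v v'
      using f_lip[OF ball[OF that(1)] ball[OF that(2)] u u] by simp
    show "norm (f v u) \<le> G" if "v \<in> cball y 1" for v
    proof -
      have "norm (f v u) = norm (f v u - f 0 0)" using f_zero by simp
      also have "\<dots> \<le> Lf * (norm (v - 0) + norm (u - 0))" using ball[OF that] u B Mu by (intro f_lip) auto
      also have "\<dots> \<le> G" unfolding G_def using ball[OF that] u Lf by (intro mult_left_mono) auto
      finally show ?thesis .
    qed
  qed blast
  have "norm (w t) \<le> B + 2" if t: "t \<in> {0..T}" for t
  proof -
    have "G * t \<le> G * T" using t G by (intro mult_left_mono) auto
    then have "norm (w t - y) \<le> 1" using drift[OF t] T(2) unfolding G_def by (simp add: mult.commute)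
    then show ?thesis using ball[of "w t"] by (simp add: dist_norm norm_minus_commute)
  qed
  then show ?thesis using that w Fe_eq_ode_solution[OF w T(1)] by blast
qed

text \<open>One sampling step of the exact model against the continuous-time flow: the error grows
  by a factor \<open>1 + K T\<close> and gains \<open>T \<delta>(T) P\<close>, where \<open>\<delta>\<close> collects the input mismatch
  \<open>U(y, T) - u\<^sub>c(y)\<close> controlled by StC and the drift of the flow during the step.\<close>
lemma one_step_error:
  assumes B: "0 \<le> B"
  obtains K T1 \<delta> where "0 \<le> K" "T1 > 0" "(\<delta> \<longlongrightarrow> 0) (at_right 0)"
    "\<And>T y x v P. 0 < T \<Longrightarrow> T < T1 \<Longrightarrow> ode_solution h x T v \<Longrightarrow> \<forall>s\<in>{0..T}. norm (v s) \<le> B \<Longrightarrow>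
       \<forall>s\<in>{0..T}. norm (v s) \<le> P \<Longrightarrow> norm (y - x) \<le> 1 \<Longrightarrow>
       norm (Fb y T - v T) \<le> norm (y - x) * (1 + K * T) + T * \<delta> T * P"
proof -
  have B2: "0 \<le> B + 2" using B by simp
  obtain Lc where Lc: "Lc > 0"
    "\<And>x y. norm x \<le> B + 2 \<Longrightarrow> norm y \<le> B + 2 \<Longrightarrow> norm (uc x - uc y) \<le> Lc * norm (x - y)"
    using uc_lipschitz[OF B2] by blast
  obtain KU TU where KU: "KU > 0" "TU > 0"
    "\<And>x y T. norm x \<le> B + 2 \<Longrightarrow> norm y \<le> B + 2 \<Longrightarrow> 0 \<le> T \<Longrightarrow> T < TU \<Longrightarrow>
       norm (U x T - U y T) \<le> KU * norm (x - y)"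
    "\<And>T. 0 \<le> T \<Longrightarrow> T < TU \<Longrightarrow> U 0 T = 0"
    using U_lipschitz[OF B2] by blast
  define Mu where "Mu = (KU + Lc) * (B + 2)"
  have Mu: "0 \<le> Mu" unfolding Mu_def using KU Lc B by simp
  obtain Lf where Lf: "Lf > 0"
    "\<And>x y u v. norm x \<le> B + 2 \<Longrightarrow> norm y \<le> B + 2 \<Longrightarrow> norm u \<le> Mu \<Longrightarrow> norm v \<le> Mu \<Longrightarrow>
       norm (f x u - f y v) \<le> Lf * (norm (x - y) + norm (u - v))"
    using f_lipschitz[OF B2 Mu] by blast
  obtain \<rho> T\<rho> where \<rho>: "class_K \<rho>" "T\<rho> > 0"
    "\<And>x T. norm x \<le> B + 2 \<Longrightarrow> 0 \<le> T \<Longrightarrow> T < T\<rho> \<Longrightarrow> norm (U x T - uc x) \<le> \<rho> T * norm x"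
    using U_consistent[OF B2] by blast
  obtain Lh where Lh: "Lh > 0" "\<And>x. norm x \<le> B + 2 \<Longrightarrow> norm (h x) \<le> Lh * norm x"
    using lipschitz_on_bounded_linear_growth[OF lipschitz_on_bounded_h h_zero B2] by blast
  have "eventually (\<lambda>T. \<rho> T < 1) (at_right 0)"
    using class_K_tendsto_0[OF \<rho>(1)] by (rule order_tendstoD) simp
  then obtain d1 where d1: "d1 > 0" "\<And>T. 0 < T \<Longrightarrow> T < d1 \<Longrightarrow> \<rho> T < 1"
    by (auto simp: eventually_at_right_field)
  define T1 where "T1 = min (min (1 / (Lf * (B + 2 + Mu))) (1 / (2 * Lf))) (min TU (min T\<rho> d1))"
  have T1: "T1 > 0" unfolding T1_def using Lf B Mu KU \<rho> d1 by auto
  define \<delta> where "\<delta> T = 2 * Lf * (\<rho> T + Lc * Lh * T)" for T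
  define K where "K = 2 * Lf * (2 + Lc)"
  have K: "0 \<le> K" unfolding K_def using Lf Lc by simp
  have "(\<delta> \<longlongrightarrow> 2 * Lf * (0 + Lc * Lh * 0)) (at_right 0)"
    unfolding \<delta>_def by (intro tendsto_intros class_K_tendsto_0[OF \<rho>(1)])
  then have \<delta>: "(\<delta> \<longlongrightarrow> 0) (at_right 0)" by simp
  have "norm (Fb y T - v T) \<le> norm (y - x) * (1 + K * T) + T * \<delta> T * P"
    if T: "0 < T" "T < T1" and v: "ode_solution h x T v" and vB: "\<forall>s\<in>{0..T}. norm (v s) \<le> B"
      and vP: "\<forall>s\<in>{0..T}. norm (v s) \<le> P" and yx: "norm (y - x) \<le> 1"
    for T y x v P
  proof -
    define e where "e = norm (y - x)"
    define u where "u = U y T"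
    have e: "0 \<le> e" unfolding e_def by simp
    have T_small: "T * (Lf * (B + 2 + Mu)) \<le> 1" "T * Lf \<le> 1/2" "T < TU" "T < T\<rho>" "\<rho> T < 1"
    proof -
      have "T < 1 / (Lf * (B + 2 + Mu))" "T < 1 / (2 * Lf)" "T < TU" "T < T\<rho>" "T < d1"
        using T unfolding T1_def by auto
      moreover have "0 < Lf * (B + 2 + Mu)" using Lf(1) B Mu by simp
      ultimately show "T * (Lf * (B + 2 + Mu)) \<le> 1" "T * Lf \<le> 1/2" "T < TU" "T < T\<rho>" "\<rho> T < 1"
        using Lf(1) d1(2)[of T] T by (auto simp: field_simps)
    qed
    have \<rho>T: "0 \<le> \<rho> T" using class_K_nonneg[OF \<rho>(1)] T by simp
    have "v 0 = x" using ode_solution_initial[OF v] T by simp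
    then have xB: "norm x \<le> B" and xP: "norm x \<le> P" using vB vP T by auto
    have P: "0 \<le> P" using xP norm_ge_zero order.trans by blast
    have yB: "norm y \<le> B + 1" and yP: "norm y \<le> P + e"
      using yx xB xP norm_triangle_sub[of y x] unfolding e_def by (auto simp: norm_minus_commute)
    have u: "norm u \<le> Mu"
    proof -
      have "norm u = norm (U y T - U 0 T)" unfolding u_def using KU(4) T T_small by simp
      also have "\<dots> \<le> KU * norm y" using KU(3)[of y 0 T] yB B T T_small by simp
      also have "\<dots> \<le> Mu" unfolding Mu_def using yB KU(1) Lc(1) B
        by (smt (verit, ccfv_SIG) mult_left_mono mult_right_mono norm_ge_zero)
      finally show ?thesis .
    qed
    have uc_Mu: "norm (uc x') \<le> Mu" if "norm x' \<le> B + 2" for x'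
    proof -
      have "norm (uc x') \<le> Lc * norm x'" using Lc(2)[OF that, of 0] uc_zero B by simp
      also have "\<dots> \<le> Mu" unfolding Mu_def using that KU(1) Lc(1) B
        by (smt (verit, ccfv_SIG) mult_left_mono mult_right_mono norm_ge_zero)
      finally show ?thesis .
    qed
    obtain w where w: "ode_solution (\<lambda>x. f x u) y T w" "Fb y T = w T"
      and wB: "\<And>t. t \<in> {0..T} \<Longrightarrow> norm (w t) \<le> B + 2"
      using exact_step_solution[OF B Mu Lf yB u _ T_small(1,2)] T unfolding Fb_def u_def by auto
    have drift: "norm (v r - x) \<le> Lh * P * T" if r: "r \<in> {0..T}" for r
    proof -
      have "norm (v r - x) \<le> (Lh * P) * r"
      proof (rule ode_solution_drift[OF lipschitz_on_bounded_h v _ r])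
        fix s assume "s \<in> {0..T}"
        then show "norm (h (v s)) \<le> Lh * P"
          using Lh vB vP B by (meson add_increasing2 order.trans mult_left_mono less_imp_le zero_le_numeral)
      qed
      also have "\<dots> \<le> Lh * P * T" using r Lh P by (intro mult_left_mono) auto
      finally show ?thesis .
    qed
    define Q where "Q = Lf * (\<rho> T * (P + e) + Lc * (e + Lh * P * T))"
    have Q: "0 \<le> Q" unfolding Q_def using Lf Lc Lh \<rho>T P e T by simp
    have input: "norm (u - uc (v r)) \<le> \<rho> T * (P + e) + Lc * (e + Lh * P * T)" if r: "r \<in> {0..T}" for r
    proof -
      have vr: "norm (v r) \<le> B + 2" using vB r by fastforce
      have "norm (u - uc (v r)) \<le> norm (u - uc y) + norm (uc y - uc (v r))"
        by (rule norm_diff_triangle_ineq[of u "uc y" "uc y" "uc (v r)", simplified])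
      also have "norm (u - uc y) \<le> \<rho> T * (P + e)"
        using \<rho>(3)[of y T] yB T T_small \<rho>T yP unfolding u_def
        by (smt (verit) mult_left_mono)
      also have "norm (uc y - uc (v r)) \<le> Lc * (e + Lh * P * T)"
      proof -
        have "norm (y - v r) \<le> e + Lh * P * T"
          using norm_triangle_ineq4[of "y - x" "v r - x"] drift[OF r] unfolding e_def by simp
        then show ?thesis using Lc(2)[of y "v r"] yB vr Lc(1) by (smt (verit) mult_left_mono)
      qed
      finally show ?thesis by simp
    qed
    have "norm (w T - v T) \<le> (norm (y - x) + Q * T) * (1 + 2 * Lf * T)"
    proof (rule ode_solution_deviation[OF lipschitz_on_bounded_f w(1) lipschitz_on_bounded_h v])
      fix r assume r: "r \<in> {0..T}"
      have vr: "norm (v r) \<le> B + 2" using vB r by fastforce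
      have "norm (f (w r) u - h (v r)) \<le> Lf * (norm (w r - v r) + norm (u - uc (v r)))"
        unfolding h_def using wB[OF r] vr u uc_Mu[OF vr] by (intro Lf(2))
      also have "\<dots> \<le> Lf * (norm (w r - v r) + (\<rho> T * (P + e) + Lc * (e + Lh * P * T)))"
        using input[OF r] Lf(1) by (intro mult_left_mono) auto
      finally show "norm (f (w r) u - h (v r)) \<le> Lf * norm (w r - v r) + Q"
        unfolding Q_def by (simp add: algebra_simps)
    qed (use T Lf(1) T_small(2) Q in \<open>auto simp: mult.commute\<close>)
    also have "\<dots> \<le> e * (1 + 2 * Lf * (2 + Lc) * T) + T * (2 * Lf * (\<rho> T + Lc * Lh * T)) * P"
      unfolding e_def[symmetric]
      by (rule one_step_bound_rearranged[OF e P T(1) T_small(2) Lf(1) Lc(1) Lh(1) \<rho>T _ Q_def])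
        (use T_small in linarith)
    finally show ?thesis unfolding w(2) e_def K_def \<delta>_def by simp
  qed
  with K T1 \<delta> show ?thesis using that by blast
qed

lemma sampled_trajectory_close:
  assumes B: "0 \<le> B" and \<tau>: "0 < \<tau>" and \<epsilon>: "0 < \<epsilon>"
  obtains Tst where "Tst > 0"
    "\<And>Ts x z k. Ts \<in> Phi Tst \<Longrightarrow> ode_solution h x \<tau> z \<Longrightarrow> \<forall>s\<in>{0..\<tau>}. norm (z s) \<le> B \<Longrightarrow>
       (\<Sum>i<k. Ts i) \<le> \<tau> \<Longrightarrow> norm (dt_traj Fb x Ts k - z (\<Sum>i<k. Ts i)) \<le> \<epsilon> * norm x"
proof -
  obtain K T1 \<delta> where K: "0 \<le> K" and T1: "T1 > 0" and \<delta>: "(\<delta> \<longlongrightarrow> 0) (at_right 0)"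
    and one_step: "\<And>T y x v P. 0 < T \<Longrightarrow> T < T1 \<Longrightarrow> ode_solution h x T v \<Longrightarrow> \<forall>s\<in>{0..T}. norm (v s) \<le> B \<Longrightarrow>
       \<forall>s\<in>{0..T}. norm (v s) \<le> P \<Longrightarrow> norm (y - x) \<le> 1 \<Longrightarrow>
       norm (Fb y T - v T) \<le> norm (y - x) * (1 + K * T) + T * \<delta> T * P"
    using one_step_error[OF B] by blast
  obtain Lh where Lh: "Lh > 0" "\<And>x. norm x \<le> B \<Longrightarrow> norm (h x) \<le> Lh * norm x"
    using lipschitz_on_bounded_linear_growth[OF lipschitz_on_bounded_h h_zero B] by blast
  define C where "C = 2 * exp (2 * Lh * \<tau>)"
  define E where "E = C * \<tau> * exp (K * \<tau>)"
  have C: "C > 0" and E: "E \<ge> 0" unfolding C_def E_def using \<tau> by auto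
  define \<epsilon>' where "\<epsilon>' = min \<epsilon> (1 / (B + 1))"
  have \<epsilon>': "\<epsilon>' > 0" unfolding \<epsilon>'_def using \<epsilon> B by auto
  define \<eta> where "\<eta> = \<epsilon>' / (E + 1)"
  have \<eta>: "\<eta> > 0" unfolding \<eta>_def using \<epsilon>' E by auto
  have \<eta>E: "\<eta> * E \<le> \<epsilon>'"
    unfolding \<eta>_def using E \<epsilon>' by (simp add: field_simps)
  have "eventually (\<lambda>T. \<delta> T < \<eta>) (at_right 0)" using \<delta> \<eta> by (rule order_tendstoD)
  then obtain T2 where T2: "T2 > 0" "\<And>T. 0 < T \<Longrightarrow> T < T2 \<Longrightarrow> \<delta> T < \<eta>"
    by (auto simp: eventually_at_right_field)
  have "norm (dt_traj Fb x Ts k - z (\<Sum>i<k. Ts i)) \<le> \<epsilon> * norm x"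
    if Ts: "Ts \<in> Phi (min T1 T2)" and z: "ode_solution h x \<tau> z" and zB: "\<forall>s\<in>{0..\<tau>}. norm (z s) \<le> B"
      and k: "(\<Sum>i<k. Ts i) \<le> \<tau>" for Ts x z k
  proof -
    have Ts_pos: "0 < Ts i" "Ts i < T1" "Ts i < T2" for i using Ts unfolding Phi_def by auto
    have z0: "z 0 = x" using ode_solution_initial[OF z] \<tau> by simp
    have x: "norm x \<le> B" using zB z0 \<tau> by force
    have zC: "norm (z s) \<le> C * norm x" if "s \<in> {0..\<tau>}" for s
    proof -
      have "norm (z s) \<le> 2 * norm x * exp (2 * Lh * s)"
        using ode_solution_linear_growth[OF lipschitz_on_bounded_h z _ Lh that] zB by blast
      also have "\<dots> \<le> 2 * norm x * exp (2 * Lh * \<tau>)" using that Lh by (intro mult_left_mono) auto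
      finally show ?thesis unfolding C_def by (simp add: algebra_simps)
    qed
    define c where "c = \<eta> * C * norm x"
    have c: "c \<ge> 0" unfolding c_def using \<eta> C by simp
    have c_small: "c * \<tau> * exp (K * \<tau>) \<le> \<epsilon>' * norm x"
    proof -
      have "c * \<tau> * exp (K * \<tau>) = (\<eta> * E) * norm x" unfolding c_def E_def by (simp add: algebra_simps)
      also have "\<dots> \<le> \<epsilon>' * norm x" using \<eta>E by (intro mult_right_mono) auto
      finally show ?thesis .
    qed
    have "\<epsilon>' * norm x \<le> (1 / (B + 1)) * (B + 1)" unfolding \<epsilon>'_def using x B by (intro mult_mono) auto
    then have \<epsilon>'x: "\<epsilon>' * norm x \<le> 1" using B by simp
    define t where "t k = (\<Sum>i<k. Ts i)" for k
    have t0: "0 \<le> t k" for k unfolding t_def using Phi_sum_nonneg[OF Ts] .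
    define e where "e k = norm (dt_traj Fb x Ts k - z (t k))" for k
    have "e k \<le> c * t k * exp (K * t k)"
      unfolding t_def
    proof (rule sampled_error_accumulation[OF c K less_imp_le[OF Ts_pos(1)]])
      show "e 0 = 0" unfolding e_def t_def using z0 by simp
      show "c * \<tau> * exp (K * \<tau>) \<le> 1" using c_small \<epsilon>'x by linarith
      show "(\<Sum>i<k. Ts i) \<le> \<tau>" by (rule k)
      fix j assume ej: "e j \<le> 1" and tj: "(\<Sum>i<Suc j. Ts i) \<le> \<tau>"
      have tS: "t (Suc j) = t j + Ts j" unfolding t_def by simp
      have v: "ode_solution h (z (t j)) (Ts j) (\<lambda>r. z (t j + r))"
        using ode_solution_shift[OF lipschitz_on_bounded_h z t0] tj tS unfolding t_def by simp
      have vB: "\<forall>s\<in>{0..Ts j}. norm (z (t j + s)) \<le> B" and vC: "\<forall>s\<in>{0..Ts j}. norm (z (t j + s)) \<le> C * norm x"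
        using zB zC t0[of j] tj tS unfolding t_def by auto
      have "e (Suc j) \<le> e j * (1 + K * Ts j) + Ts j * \<delta> (Ts j) * (C * norm x)"
        using one_step[OF Ts_pos(1,2) v vB vC ej[unfolded e_def]] tS unfolding e_def by simp
      also have "Ts j * \<delta> (Ts j) * (C * norm x) \<le> Ts j * c"
        unfolding c_def using T2(2)[OF Ts_pos(1,3)] Ts_pos(1)[of j] C
        by (simp add: mult.assoc mult_left_mono mult_right_mono less_imp_le)
      finally show "e (Suc j) \<le> e j * (1 + K * Ts j) + Ts j * c" by simp
    qed
    also have "\<dots> \<le> c * \<tau> * exp (K * \<tau>)"
      using c t0[of k] k K unfolding t_def by (intro mult_mono) (auto intro: mult_left_mono)
    also have "\<dots> \<le> \<epsilon> * norm x"
      using c_small unfolding \<epsilon>'_def by (smt (verit) min.cobounded1 mult_right_mono norm_ge_zero)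
    finally show ?thesis unfolding e_def t_def .
  qed
  then show ?thesis using that[of "min T1 T2"] T1 T2 by auto
qed

lemma sampled_close_to_ct_solution:
  assumes B: "0 \<le> B" and \<tau>: "0 < \<tau>" and \<epsilon>: "0 < \<epsilon>"
  obtains Tst where "Tst > 0" "Tst \<le> 1"
    "\<And>Ts x z k. Ts \<in> Phi Tst \<Longrightarrow> ct_sol h x z \<Longrightarrow> \<forall>s\<in>{0..\<tau>}. norm (z s) \<le> B \<Longrightarrow>
       (\<Sum>i<k. Ts i) \<le> \<tau> \<Longrightarrow> norm (dt_traj Fb x Ts k - z (\<Sum>i<k. Ts i)) \<le> \<epsilon> * norm x"
proof -
  obtain T0 where T0: "T0 > 0"
    and close: "\<And>Ts x z k. Ts \<in> Phi T0 \<Longrightarrow> ode_solution h x \<tau> z \<Longrightarrow> \<forall>s\<in>{0..\<tau>}. norm (z s) \<le> B \<Longrightarrow>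
       (\<Sum>i<k. Ts i) \<le> \<tau> \<Longrightarrow> norm (dt_traj Fb x Ts k - z (\<Sum>i<k. Ts i)) \<le> \<epsilon> * norm x"
    using sampled_trajectory_close[OF B \<tau> \<epsilon>] by blast
  show ?thesis
  proof (rule that[of "min T0 1"])
    fix Ts x z k assume "Ts \<in> Phi (min T0 1)" "ct_sol h x z" "\<forall>s\<in>{0..\<tau>}. norm (z s) \<le> B"
      "(\<Sum>i<k. Ts i) \<le> \<tau>"
    then show "norm (dt_traj Fb x Ts k - z (\<Sum>i<k. Ts i)) \<le> \<epsilon> * norm x"
      using close Phi_mono[of "min T0 1" T0] \<tau> unfolding ct_sol_iff_ode_solution by auto
  qed (use T0 in auto)
qed

text \<open>At time \<open>\<tau> = ln (4 K) / \<lambda>\<close> the continuous-time bound has decayed to \<open>|x| / 4\<close>; with a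
  tracking error of \<open>|x| / 4\<close> the sampled trajectory halves its norm over each window.\<close>
lemma exp_bound_CT_to_DT:
  assumes K: "K \<ge> 1" and R: "R \<ge> 0" and lam: "lam > 0"
    and ct: "\<And>x. norm x \<le> R \<Longrightarrow> \<exists>z. ct_sol h x z \<and> (\<forall>t\<ge>0. norm (z t) \<le> K * norm x * exp (- lam * t))"
  obtains Tst where "Tst > 0" "\<And>Ts x k. Ts \<in> Phi Tst \<Longrightarrow> norm x \<le> R \<Longrightarrow>
    norm (dt_traj Fb x Ts k) \<le> 2 * (K + 1) * norm x * exp (- (ln 2 / (ln (4 * K) / lam + 1)) * (\<Sum>i<k. Ts i))"
proof -
  define \<tau> where "\<tau> = ln (4 * K) / lam"
  have \<tau>: "\<tau> > 0" unfolding \<tau>_def using K lam by simp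
  have decay: "K * exp (- lam * t) \<le> 1/4" if "\<tau> \<le> t" for t
  proof -
    have "ln (4 * K) \<le> lam * t" using that lam unfolding \<tau>_def by (simp add: field_simps)
    have "4 * K = exp (ln (4 * K))" using K by simp
    also have "\<dots> \<le> exp (lam * t)" using \<open>ln (4 * K) \<le> lam * t\<close> by simp
    finally have "4 * K \<le> exp (lam * t)" .
    then show ?thesis using K by (simp add: exp_minus field_simps)
  qed
  have KR: "0 \<le> K * R" using K R by simp
  obtain Tst where Tst: "Tst > 0" "Tst \<le> 1"
    and close: "\<And>Ts x z k. Ts \<in> Phi Tst \<Longrightarrow> ct_sol h x z \<Longrightarrow> \<forall>s\<in>{0..\<tau> + 1}. norm (z s) \<le> K * R \<Longrightarrow>
       (\<Sum>i<k. Ts i) \<le> \<tau> + 1 \<Longrightarrow> norm (dt_traj Fb x Ts k - z (\<Sum>i<k. Ts i)) \<le> 1/4 * norm x"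
    using sampled_close_to_ct_solution[OF KR, of "\<tau> + 1" "1/4"] \<tau> by auto
  have window: "norm (dt_traj Fb y Ts k) \<le> (K + 1) * norm y \<and>
      (\<tau> \<le> (\<Sum>i<k. Ts i) \<longrightarrow> norm (dt_traj Fb y Ts k) \<le> norm y / 2)"
    if Ts: "Ts \<in> Phi Tst" and y: "norm y \<le> R" and k: "(\<Sum>i<k. Ts i) \<le> \<tau> + 1" for Ts y k
  proof -
    obtain z where z: "ct_sol h y z" and zb: "\<And>t. 0 \<le> t \<Longrightarrow> norm (z t) \<le> K * norm y * exp (- lam * t)"
      using ct[OF y] by blast
    have zK: "norm (z t) \<le> K * norm y" if "0 \<le> t" for t
    proof -
      have "exp (- lam * t) \<le> 1" using that lam by simp
      then show ?thesis using zb[OF that] K by (smt (verit) mult_left_le mult_nonneg_nonneg norm_ge_zero)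
    qed
    have "norm (z s) \<le> K * R" if "s \<in> {0..\<tau> + 1}" for s
    proof -
      have "K * norm y \<le> K * R" using y K by (intro mult_left_mono) auto
      then show ?thesis using zK[of s] that by simp
    qed
    then have "norm (dt_traj Fb y Ts k - z (\<Sum>i<k. Ts i)) \<le> 1/4 * norm y"
      using close[OF Ts z _ k] by blast
    then have tri: "norm (dt_traj Fb y Ts k) \<le> norm (z (\<Sum>i<k. Ts i)) + 1/4 * norm y"
      using norm_triangle_sub[of "dt_traj Fb y Ts k" "z (\<Sum>i<k. Ts i)"] by linarith
    have t0: "0 \<le> (\<Sum>i<k. Ts i)" by (rule Phi_sum_nonneg[OF Ts])
    show ?thesis
    proof (intro conjI impI)
      have "(K + 1) * norm y = K * norm y + norm y" by (simp add: algebra_simps)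
      then show "norm (dt_traj Fb y Ts k) \<le> (K + 1) * norm y"
        using tri zK[OF t0] norm_ge_zero[of y] by linarith
      assume "\<tau> \<le> (\<Sum>i<k. Ts i)"
      then have "K * exp (- lam * (\<Sum>i<k. Ts i)) * norm y \<le> 1/4 * norm y"
        by (intro mult_right_mono decay) auto
      then show "norm (dt_traj Fb y Ts k) \<le> norm y / 2" using tri zb[OF t0] by (simp add: algebra_simps)
    qed
  qed
  show ?thesis
    using that[OF Tst(1)] dt_exp_bound_of_window_halving[of "K + 1" \<tau> Tst R Fb, OF _ \<tau> Tst(2) window] K
    unfolding \<tau>_def by auto
qed

lemma LES_VSR_of_LES: "LES h \<Longrightarrow> LES_VSR Fb"
proof -
  assume "LES h"
  then obtain K R lam where K: "K \<ge> 1" and R: "R > 0" and lam: "lam > 0"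
    and ct: "\<And>x. norm x \<le> R \<Longrightarrow> \<exists>z. ct_sol h x z \<and> (\<forall>t\<ge>0. norm (z t) \<le> K * norm x * exp (- lam * t))"
    unfolding LES_def by blast
  define \<mu> where "\<mu> = ln 2 / (ln (4 * K) / lam + 1)"
  have \<mu>: "\<mu> > 0" unfolding \<mu>_def using K lam by (simp add: add_pos_nonneg)
  obtain Tst where "Tst > 0"
    "\<And>Ts x k. Ts \<in> Phi Tst \<Longrightarrow> norm x \<le> R \<Longrightarrow> norm (dt_traj Fb x Ts k) \<le> 2 * (K + 1) * norm x * exp (- \<mu> * (\<Sum>i<k. Ts i))"
    using exp_bound_CT_to_DT[OF K less_imp_le[OF R] lam ct] unfolding \<mu>_def by blast
  then show "LES_VSR Fb"
    unfolding LES_VSR_def using K R \<mu> by (intro exI[of _ "2 * (K + 1)"] conjI exI[of _ R] exI[of _ Tst] exI[of _ \<mu>]) auto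
qed

lemma SES_VSR_of_GES: "GES h \<Longrightarrow> SES_VSR Fb"
proof -
  assume "GES h"
  then obtain K lam where K: "K \<ge> 1" and lam: "lam > 0"
    and ct: "\<And>x. \<exists>z. ct_sol h x z \<and> (\<forall>t\<ge>0. norm (z t) \<le> K * norm x * exp (- lam * t))"
    unfolding GES_def by blast
  define \<mu> where "\<mu> = ln 2 / (ln (4 * K) / lam + 1)"
  have \<mu>: "\<mu> > 0" unfolding \<mu>_def using K lam by (simp add: add_pos_nonneg)
  have "\<exists>Tst>0. \<forall>Ts\<in>Phi Tst. \<forall>x. norm x \<le> M \<longrightarrow>
      (\<forall>k. norm (dt_traj Fb x Ts k) \<le> 2 * (K + 1) * norm x * exp (- \<mu> * (\<Sum>i<k. Ts i)))" if "0 \<le> M" for M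
    using exp_bound_CT_to_DT[OF K that lam ct] unfolding \<mu>_def by metis
  then show "SES_VSR Fb"
    unfolding SES_VSR_def using K \<mu> by (intro exI[of _ "2 * (K + 1)"] conjI exI[of _ \<mu>]) auto
qed

lemma KL_window_bound:
  assumes KL: "class_KL \<beta>" and ct: "\<And>x. \<exists>z. ct_sol h x z \<and> (\<forall>t\<ge>0. norm (z t) \<le> \<beta> (norm x) t)"
    and M: "0 \<le> M" and \<nu>: "0 < \<nu>" and \<tau>: "0 < \<tau>" and decay: "\<And>t. \<tau> \<le> t \<Longrightarrow> \<beta> M t < \<nu> / 2"
  obtains Tst where "Tst > 0" "Tst \<le> 1"
    "\<And>Ts y k. Ts \<in> Phi Tst \<Longrightarrow> norm y \<le> M \<Longrightarrow> (\<Sum>i<k. Ts i) \<le> \<tau> + 1 \<Longrightarrow>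
       norm (dt_traj Fb y Ts k) \<le> \<beta> (norm y) (\<Sum>i<k. Ts i) + \<nu> / 2 \<and>
       (\<tau> \<le> (\<Sum>i<k. Ts i) \<longrightarrow> norm (dt_traj Fb y Ts k) \<le> \<nu>)"
proof -
  define B where "B = \<beta> M 0"
  have B: "0 \<le> B" unfolding B_def using class_KL_nonneg[OF KL M] by simp
  define \<epsilon> where "\<epsilon> = \<nu> / (2 * (M + 1))"
  have \<epsilon>: "\<epsilon> > 0" unfolding \<epsilon>_def using \<nu> M by simp
  obtain Tst where Tst: "Tst > 0" "Tst \<le> 1"
    and close: "\<And>Ts x z k. Ts \<in> Phi Tst \<Longrightarrow> ct_sol h x z \<Longrightarrow> \<forall>s\<in>{0..\<tau> + 1}. norm (z s) \<le> B \<Longrightarrow>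
       (\<Sum>i<k. Ts i) \<le> \<tau> + 1 \<Longrightarrow> norm (dt_traj Fb x Ts k - z (\<Sum>i<k. Ts i)) \<le> \<epsilon> * norm x"
    using sampled_close_to_ct_solution[OF B _ \<epsilon>, of "\<tau> + 1"] \<tau> by auto
  have "norm (dt_traj Fb y Ts k) \<le> \<beta> (norm y) (\<Sum>i<k. Ts i) + \<nu> / 2 \<and>
      (\<tau> \<le> (\<Sum>i<k. Ts i) \<longrightarrow> norm (dt_traj Fb y Ts k) \<le> \<nu>)"
    if Ts: "Ts \<in> Phi Tst" and y: "norm y \<le> M" and k: "(\<Sum>i<k. Ts i) \<le> \<tau> + 1" for Ts y k
  proof -
    obtain z where z: "ct_sol h y z" and zb: "\<And>t. 0 \<le> t \<Longrightarrow> norm (z t) \<le> \<beta> (norm y) t" using ct by blast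
    have "norm (z s) \<le> B" if "s \<in> {0..\<tau> + 1}" for s
    proof -
      have "norm (z s) \<le> \<beta> (norm y) s" using zb that by simp
      also have "\<dots> \<le> \<beta> (norm y) 0" using class_KL_antimono[OF KL, of "norm y" 0 s] that by simp
      also have "\<dots> \<le> B" unfolding B_def using class_KL_mono[OF KL _ y] by simp
      finally show ?thesis .
    qed
    then have "norm (dt_traj Fb y Ts k - z (\<Sum>i<k. Ts i)) \<le> \<epsilon> * norm y" using close[OF Ts z _ k] by blast
    moreover have "\<epsilon> * norm y \<le> \<nu> / 2"
    proof -
      have "\<epsilon> * norm y \<le> \<epsilon> * (M + 1)" using \<epsilon> y by (intro mult_left_mono) auto
      also have "\<dots> = \<nu> / 2" unfolding \<epsilon>_def using M by (simp add: field_simps)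
      finally show ?thesis .
    qed
    ultimately have tri: "norm (dt_traj Fb y Ts k) \<le> norm (z (\<Sum>i<k. Ts i)) + \<nu> / 2"
      using norm_triangle_sub[of "dt_traj Fb y Ts k" "z (\<Sum>i<k. Ts i)"] by linarith
    have t0: "0 \<le> (\<Sum>i<k. Ts i)" by (rule Phi_sum_nonneg[OF Ts])
    have zt: "norm (z (\<Sum>i<k. Ts i)) \<le> \<beta> (norm y) (\<Sum>i<k. Ts i)" using zb[OF t0] .
    show ?thesis
    proof (intro conjI impI)
      show "norm (dt_traj Fb y Ts k) \<le> \<beta> (norm y) (\<Sum>i<k. Ts i) + \<nu> / 2" using tri zt by linarith
      assume "\<tau> \<le> (\<Sum>i<k. Ts i)"
      then have "\<beta> (norm y) (\<Sum>i<k. Ts i) < \<nu> / 2"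
        using class_KL_mono[OF KL _ y t0] decay by (meson norm_ge_zero order.strict_trans1)
      then show "norm (dt_traj Fb y Ts k) \<le> \<nu>" using tri zt by linarith
    qed
  qed
  then show ?thesis using that Tst by blast
qed

text \<open>Choose \<open>\<nu>\<close> so small that \<open>\<beta>(\<nu>, 0) < R/2\<close>: trajectories starting in the \<open>\<nu>\<close>-ball then stay
  in the \<open>R\<close>-ball, and every trajectory enters the \<open>\<nu>\<close>-ball after the uniform time \<open>\<tau>\<close>.\<close>
lemma SPS_VSR_of_GAS: "GAS h \<Longrightarrow> SPS_VSR Fb"
proof -
  assume "GAS h"
  then obtain \<beta> where KL: "class_KL \<beta>" and ct: "\<And>x. \<exists>z. ct_sol h x z \<and> (\<forall>t\<ge>0. norm (z t) \<le> \<beta> (norm x) t)"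
    unfolding GAS_def by blast
  have "\<exists>Tst>0. \<forall>Ts\<in>Phi Tst. \<forall>x. norm x \<le> M \<longrightarrow> (\<forall>k. norm (dt_traj Fb x Ts k) \<le> \<beta> (norm x) (\<Sum>i<k. Ts i) + R)"
    if M: "0 \<le> M" and R: "0 < R" for M R
  proof -
    have "class_K (\<lambda>r. \<beta> r 0)" using KL unfolding class_KL_def by simp
    then have "eventually (\<lambda>r. \<beta> r 0 < R / 2) (at_right 0)"
      using R by (intro order_tendstoD(2)[OF class_K_tendsto_0]) auto
    then obtain d where d: "d > 0" "\<And>r. 0 < r \<Longrightarrow> r < d \<Longrightarrow> \<beta> r 0 < R / 2"
      by (auto simp: eventually_at_right_field)
    define \<nu> where "\<nu> = min (d / 2) (R / 2)"
    have \<nu>: "\<nu> > 0" "\<nu> \<le> R / 2" "\<beta> \<nu> 0 < R / 2" unfolding \<nu>_def using d R by auto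
    define M' where "M' = max M \<nu>"
    have M': "M \<le> M'" "\<nu> \<le> M'" "0 \<le> M'" unfolding M'_def using M by auto
    have "((\<lambda>t. \<beta> M' t) \<longlongrightarrow> 0) at_top" using KL M'(3) unfolding class_KL_def by blast
    then have "eventually (\<lambda>t. \<beta> M' t < \<nu> / 2) at_top" using \<nu>(1) by (intro order_tendstoD(2)) auto
    then obtain \<tau>0 where \<tau>0: "\<And>t. \<tau>0 \<le> t \<Longrightarrow> \<beta> M' t < \<nu> / 2" by (auto simp: eventually_at_top_linorder)
    define \<tau> where "\<tau> = max \<tau>0 1"
    have \<tau>: "\<tau> > 0" "\<And>t. \<tau> \<le> t \<Longrightarrow> \<beta> M' t < \<nu> / 2" unfolding \<tau>_def using \<tau>0 by auto
    obtain Tst where Tst: "Tst > 0" "Tst \<le> 1"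
      and window: "\<And>Ts y k. Ts \<in> Phi Tst \<Longrightarrow> norm y \<le> M' \<Longrightarrow> (\<Sum>i<k. Ts i) \<le> \<tau> + 1 \<Longrightarrow>
         norm (dt_traj Fb y Ts k) \<le> \<beta> (norm y) (\<Sum>i<k. Ts i) + \<nu> / 2 \<and>
         (\<tau> \<le> (\<Sum>i<k. Ts i) \<longrightarrow> norm (dt_traj Fb y Ts k) \<le> \<nu>)"
      using KL_window_bound[OF KL ct M'(3) \<nu>(1) \<tau>] by blast
    have "norm (dt_traj Fb x Ts k) \<le> \<beta> (norm x) (\<Sum>i<k. Ts i) + R" if Ts: "Ts \<in> Phi Tst" and x: "norm x \<le> M" for Ts x k
    proof (rule dt_practical_bound_of_window[OF \<tau>(1) Tst(2) _ _ _ Ts x])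
      fix Ts' and y :: "real^'n" and k' assume Ts': "Ts' \<in> Phi Tst" and "norm y \<le> M" and k': "(\<Sum>i<k'. Ts' i) \<le> \<tau> + 1"
      then have "norm y \<le> M'" using M' by simp
      then show "norm (dt_traj Fb y Ts' k') \<le> \<beta> (norm y) (\<Sum>i<k'. Ts' i) + R \<and>
          (\<tau> \<le> (\<Sum>i<k'. Ts' i) \<longrightarrow> norm (dt_traj Fb y Ts' k') \<le> \<nu>)"
        using window[OF Ts' _ k'] \<nu> by fastforce
    next
      fix Ts' and y :: "real^'n" and k' assume Ts': "Ts' \<in> Phi Tst" and y: "norm y \<le> \<nu>" and k': "(\<Sum>i<k'. Ts' i) \<le> \<tau> + 1"
      have "\<beta> (norm y) (\<Sum>i<k'. Ts' i) \<le> \<beta> (norm y) 0"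
        using class_KL_antimono[OF KL _ _ Phi_sum_nonneg[OF Ts']] by simp
      also have "\<dots> \<le> \<beta> \<nu> 0" using class_KL_mono[OF KL _ y] by simp
      finally have "\<beta> (norm y) (\<Sum>i<k'. Ts' i) < R / 2" using \<nu> by linarith
      moreover have "norm y \<le> M'" using y M' by simp
      ultimately show "norm (dt_traj Fb y Ts' k') \<le> R \<and> (\<tau> \<le> (\<Sum>i<k'. Ts' i) \<longrightarrow> norm (dt_traj Fb y Ts' k') \<le> \<nu>)"
        using window[OF Ts' _ k'] \<nu> by fastforce
    qed (use class_KL_nonneg[OF KL] in blast)
    then show ?thesis using Tst by blast
  qed
  then show "SPS_VSR Fb" unfolding SPS_VSR_def using KL by blast
qed

text \<open>Uniform sampling with \<open>N\<close> steps of length \<open>s / N\<close> reaches time \<open>s\<close> exactly, and the sampled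
  trajectory is \<open>\<eta> |x|\<close>-close to the solution for every \<open>\<eta> > 0\<close>.\<close>
lemma ct_bound_of_sampled_bound:
  assumes z: "ode_solution h x t z" and zB: "\<forall>r\<in>{0..t}. norm (z r) \<le> B" and B: "0 \<le> B"
    and s: "s \<in> {0..t}" and T0: "T0 > 0"
    and dt: "\<And>Ts k. Ts \<in> Phi T0 \<Longrightarrow> norm (dt_traj Fb x Ts k) \<le> b (\<Sum>i<k. Ts i)"
  shows "norm (z s) \<le> b s"
proof (cases "s = 0")
  case True
  have "norm x \<le> b 0" using dt[OF Phi_const[of "T0 / 2" T0], of 0] T0 by simp
  then show ?thesis using ode_solution_initial[OF z] s True by auto
next
  case False
  then have s0: "0 < s" and st: "s \<le> t" using s by auto
  have close_\<eta>: "norm (z s) \<le> b s + \<eta> * norm x" if \<eta>: "\<eta> > 0" for \<eta>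
  proof -
    have t: "0 < t" using s0 st by simp
    obtain Tst where Tst: "Tst > 0"
      and close: "\<And>Ts x z k. Ts \<in> Phi Tst \<Longrightarrow> ode_solution h x t z \<Longrightarrow> \<forall>s\<in>{0..t}. norm (z s) \<le> B \<Longrightarrow>
         (\<Sum>i<k. Ts i) \<le> t \<Longrightarrow> norm (dt_traj Fb x Ts k - z (\<Sum>i<k. Ts i)) \<le> \<eta> * norm x"
      using sampled_trajectory_close[OF B t \<eta>] by blast
    obtain N :: nat where N: "s / min Tst T0 < real N" using reals_Archimedean2 by blast
    have "0 < s / min Tst T0" using s0 Tst T0 by simp
    then have N0: "real N > 0" using N by linarith
    define Ts where "Ts = (\<lambda>i::nat. s / real N)"
    have m: "0 < min Tst T0" using Tst T0 by simp
    have "s < min Tst T0 * real N" using N by (simp only: pos_divide_less_eq[OF m] mult.commute)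
    then have "s / real N < min Tst T0" by (simp only: pos_divide_less_eq[OF N0])
    then have Ts: "Ts \<in> Phi Tst" "Ts \<in> Phi T0" unfolding Ts_def using s0 N0 by (auto intro: Phi_const)
    have sum: "(\<Sum>i<N. Ts i) = s" unfolding Ts_def using N0 by simp
    have "norm (dt_traj Fb x Ts N - z s) \<le> \<eta> * norm x" using close[OF Ts(1) z zB, of N] sum st by simp
    moreover have "norm (dt_traj Fb x Ts N) \<le> b s" using dt[OF Ts(2), of N] sum by simp
    ultimately show ?thesis using norm_triangle_sub[of "z s" "dt_traj Fb x Ts N"] by (simp add: norm_minus_commute)
  qed
  have "norm (z s) \<le> b s + \<eta>" if \<eta>: "\<eta> > 0" for \<eta>
  proof -
    have pos: "norm x + 1 > 0" using norm_ge_zero[of x] by linarith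
    have "\<eta> / (norm x + 1) * norm x \<le> \<eta> / (norm x + 1) * (norm x + 1)"
      using \<eta> pos by (intro mult_left_mono) auto
    also have "\<dots> = \<eta>" using pos by simp
    finally show ?thesis using close_\<eta>[of "\<eta> / (norm x + 1)"] \<eta> pos by simp
  qed
  then show ?thesis by (rule field_le_epsilon)
qed

lemma ct_solution_of_sampled_bound:
  assumes x: "norm x \<le> B" and bB: "\<And>s. 0 \<le> s \<Longrightarrow> b s \<le> B"
    and dt: "\<And>r. r > 0 \<Longrightarrow> \<exists>T0>0. \<forall>Ts\<in>Phi T0. \<forall>k. norm (dt_traj Fb x Ts k) \<le> b (\<Sum>i<k. Ts i) + r"
  shows "\<exists>z. ct_sol h x z \<and> (\<forall>s\<ge>0. norm (z s) \<le> b s)"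
proof -
  have B: "0 \<le> B" using x norm_ge_zero order_trans by blast
  have "\<exists>z. (\<forall>t\<ge>0. ode_solution h x t z) \<and> (\<forall>s\<ge>0. norm (z s) \<le> b s)"
  proof (rule ode_solution_continuation[OF lipschitz_on_bounded_h B x bB])
    fix t z assume z: "ode_solution h x t z" and zB: "\<forall>s\<in>{0..t}. norm (z s) \<le> B + 1"
    have "norm (z s) \<le> b s + r" if s: "s \<in> {0..t}" and r: "r > 0" for s r
    proof -
      obtain T0 where "T0 > 0" "\<forall>Ts\<in>Phi T0. \<forall>k. norm (dt_traj Fb x Ts k) \<le> b (\<Sum>i<k. Ts i) + r"
        using dt[OF r] by blast
      then show ?thesis using ct_bound_of_sampled_bound[OF z zB _ s, of T0 "\<lambda>s. b s + r"] B by simp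
    qed
    then show "\<forall>s\<in>{0..t}. norm (z s) \<le> b s" by (blast intro: field_le_epsilon)
  qed (simp, blast)
  then show ?thesis unfolding ct_sol_iff_ode_solution .
qed

lemma LES_of_LES_VSR: "LES_VSR Fb \<Longrightarrow> LES h"
proof -
  assume "LES_VSR Fb"
  then obtain K R Tst lam where K: "K \<ge> 1" and R: "R > 0" and Tst: "Tst > 0" and lam: "lam > 0"
    and dt: "\<forall>Ts\<in>Phi Tst. \<forall>x. norm x \<le> R \<longrightarrow>
       (\<forall>k. norm (dt_traj Fb x Ts k) \<le> K * norm x * exp (- lam * (\<Sum>i<k. Ts i)))"
    unfolding LES_VSR_def by blast
  have "\<exists>z. ct_sol h x z \<and> (\<forall>t\<ge>0. norm (z t) \<le> K * norm x * exp (- lam * t))" if x: "norm x \<le> R" for x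
  proof (rule ct_solution_of_sampled_bound)
    show "norm x \<le> K * norm x" using K by (simp add: mult_le_cancel_right1)
    show "K * norm x * exp (- lam * s) \<le> K * norm x" if "0 \<le> s" for s
      using that K lam by (intro mult_left_le) auto
    show "\<exists>T0>0. \<forall>Ts\<in>Phi T0. \<forall>k. norm (dt_traj Fb x Ts k) \<le> K * norm x * exp (- lam * (\<Sum>i<k. Ts i)) + r"
      if "r > 0" for r
      using Tst dt x that by (intro exI[of _ Tst]) (auto intro: add_increasing2 less_imp_le)
  qed
  then show "LES h" unfolding LES_def using K R lam by blast
qed

lemma GES_of_SES_VSR: "SES_VSR Fb \<Longrightarrow> GES h"
proof -
  assume "SES_VSR Fb"
  then obtain K lam where K: "K \<ge> 1" and lam: "lam > 0"
    and dt: "\<forall>M\<ge>0. \<exists>Tst>0. \<forall>Ts\<in>Phi Tst. \<forall>x. norm x \<le> M \<longrightarrow>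
       (\<forall>k. norm (dt_traj Fb x Ts k) \<le> K * norm x * exp (- lam * (\<Sum>i<k. Ts i)))"
    unfolding SES_VSR_def by blast
  have "\<exists>z. ct_sol h x z \<and> (\<forall>t\<ge>0. norm (z t) \<le> K * norm x * exp (- lam * t))" for x
  proof (rule ct_solution_of_sampled_bound)
    show "norm x \<le> K * norm x" using K by (simp add: mult_le_cancel_right1)
    show "K * norm x * exp (- lam * s) \<le> K * norm x" if "0 \<le> s" for s
      using that K lam by (intro mult_left_le) auto
    obtain Tst where "Tst > 0" "\<forall>Ts\<in>Phi Tst. \<forall>k. norm (dt_traj Fb x Ts k) \<le> K * norm x * exp (- lam * (\<Sum>i<k. Ts i))"
      using dt[rule_format, of "norm x"] by auto
    then show "\<exists>T0>0. \<forall>Ts\<in>Phi T0. \<forall>k. norm (dt_traj Fb x Ts k) \<le> K * norm x * exp (- lam * (\<Sum>i<k. Ts i)) + r"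
      if "r > 0" for r
      using that by (intro exI[of _ Tst]) (auto intro: add_increasing2 less_imp_le)
  qed
  then show "GES h" unfolding GES_def using K lam by blast
qed

lemma GAS_of_SPS_VSR: "SPS_VSR Fb \<Longrightarrow> GAS h"
proof -
  assume "SPS_VSR Fb"
  then obtain \<beta> where KL: "class_KL \<beta>" and dt: "\<forall>M\<ge>0. \<forall>R>0. \<exists>Tst>0. \<forall>Ts\<in>Phi Tst. \<forall>x. norm x \<le> M \<longrightarrow>
        (\<forall>k. norm (dt_traj Fb x Ts k) \<le> \<beta> (norm x) (\<Sum>i<k. Ts i) + R)"
    unfolding SPS_VSR_def by blast
  have "\<exists>z. ct_sol h x z \<and> (\<forall>t\<ge>0. norm (z t) \<le> \<beta> (norm x) t)" for x
  proof (rule ct_solution_of_sampled_bound)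
    show dt_x: "\<exists>T0>0. \<forall>Ts\<in>Phi T0. \<forall>k. norm (dt_traj Fb x Ts k) \<le> \<beta> (norm x) (\<Sum>i<k. Ts i) + r"
      if "r > 0" for r
      using dt[rule_format, of "norm x" r] that by fastforce
    show "norm x \<le> \<beta> (norm x) 0"
    proof (rule field_le_epsilon)
      fix r :: real assume "0 < r"
      then obtain T0 where T0: "T0 > 0"
        and bound: "\<forall>Ts\<in>Phi T0. \<forall>k. norm (dt_traj Fb x Ts k) \<le> \<beta> (norm x) (\<Sum>i<k. Ts i) + r"
        using dt_x by blast
      have "(\<lambda>_. T0 / 2) \<in> Phi T0" using T0 by (intro Phi_const) auto
      from bound[rule_format, OF this, of 0] show "norm x \<le> \<beta> (norm x) 0 + r" by simp
    qed
    show "\<beta> (norm x) s \<le> \<beta> (norm x) 0" if "0 \<le> s" for s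
      using class_KL_antimono[OF KL _ _ that] by simp
  qed
  then show "GAS h" unfolding GAS_def using KL by blast
qed

end

theorem theorem3:
  fixes f :: "real^'n \<Rightarrow> real^'m \<Rightarrow> real^'n"
    and U :: "real^'n \<Rightarrow> real \<Rightarrow> real^'m"
  assumes "assumption1 f"
    and "assumption2 (\<lambda>x. U x 0)"
    and "StL U"
    and "StC (\<lambda>x T. U x 0) U"
  shows "(LES (\<lambda>x. f x (U x 0)) \<longleftrightarrow> LES_VSR (\<lambda>x T. Fe f x (U x T) T))
       \<and> (GALES (\<lambda>x. f x (U x 0)) \<longleftrightarrow> SLES_VSR (\<lambda>x T. Fe f x (U x T) T))
       \<and> (GES (\<lambda>x. f x (U x 0)) \<longleftrightarrow> SES_VSR (\<lambda>x T. Fe f x (U x T) T))"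
proof -
  interpret sampled_data_system f U using assms by unfold_locales
  have h: "h = (\<lambda>x. f x (U x 0))" unfolding h_def uc_def ..
  have Fb: "Fb = (\<lambda>x T. Fe f x (U x T) T)" unfolding Fb_def ..
  have "LES h \<longleftrightarrow> LES_VSR Fb" using LES_VSR_of_LES LES_of_LES_VSR by blast
  moreover have "GALES h \<longleftrightarrow> SLES_VSR Fb"
    unfolding GALES_def SLES_VSR_def using LES_VSR_of_LES LES_of_LES_VSR SPS_VSR_of_GAS GAS_of_SPS_VSR by blast
  moreover have "GES h \<longleftrightarrow> SES_VSR Fb" using SES_VSR_of_GES GES_of_SES_VSR by blast
  ultimately show ?thesis unfolding h Fb by blast
qed

end
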